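(* There exists a function $f:\mathbb{N}^3\to\mathbb{N}$ such that $\mathrm{Sep}(G,k)\le f(n,m,k)$ for every $k\in\mathbb{N}$ and every finite graph $G$ for which $\lceil G\rceil$ can be linearly ordered by an MSO-formula of the form $\varphi(x,y;\bar P)$ with quantifier-rank $\mathrm{qr}(\varphi)\le m$ and parameters $\bar P=\langle P_0,\dots,P_{n-1}\rangle$ (i.e. $\{(a,b):\lceil G\rceil\models\varphi(a,b;\bar P)\}$ is a linear order on the universe of $\lceil G\rceil$). Moreover, there is a computable function $g$ such that $f(n,m,k)\le \exp_{g(n,m)}(k)$ for all $n,m,k$.
   Context: Graphs are finite, simple, loop-free, undirected. For a graph $G=\langle V,E\rangle$, $\lfloor G\rfloor=\langle V,\mathrm{edg}\rangle$ is the structure with universe $V$ and the binary edge relation, and $\lceil G\rceil=\langle V\cup E,\mathrm{inc}\rangle$ is the structure whose universe contains the vertices and the edges, with $\mathrm{inc}\subseteq V\times E$ the incidence relation. The quantifier-rank counts both first-order and set quantifiers. A structure is connected if it is not the disjoint union of two nonempty substructures; connected components are maximal nonempty connected substructures. $\mathrm{Sep}(G,k)$ is the maximum, over all vertex sets $S$ with $|S|\le k$, of the number of connected components of $G-S$ (computed in $\lfloor G\rfloor$). $\exp_0(n)=n$, $\exp_{k+1}(n)=2^{\exp_k(n)}$. *)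

theory Defs
  imports Main
begin

definition graph :: "nat set \<Rightarrow> nat set set \<Rightarrow> bool" where
  "graph V E \<longleftrightarrow> finite V \<and> (\<forall>e\<in>E. \<exists>u v. u \<noteq> v \<and> u \<in> V \<and> v \<in> V \<and> e = {u, v})"

definition adj_minus :: "nat set \<Rightarrow> nat set set \<Rightarrow> nat set \<Rightarrow> (nat \<times> nat) set" where
  "adj_minus V E S = {(u, w). u \<in> V - S \<and> w \<in> V - S \<and> {u, w} \<in> E}"

definition components_minus :: "nat set \<Rightarrow> nat set set \<Rightarrow> nat set \<Rightarrow> nat set set" where
  "components_minus V E S =
     (\<lambda>v. {w \<in> V - S. (v, w) \<in> (adj_minus V E S)\<^sup>*}) ` (V - S)"

definition Sep :: "nat set \<Rightarrow> nat set set \<Rightarrow> nat \<Rightarrow> nat" where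
  "Sep V E k = Max {card (components_minus V E S) | S. S \<subseteq> V \<and> card S \<le> k}"

section \<open>The incidence structure \<lceil>G\<rceil>\<close>

datatype inc_elem = VElem nat | EElem "nat set"

definition inc_univ :: "nat set \<Rightarrow> nat set set \<Rightarrow> inc_elem set" where
  "inc_univ V E = VElem ` V \<union> EElem ` E"

definition inc_rel :: "nat set \<Rightarrow> nat set set \<Rightarrow> inc_elem \<Rightarrow> inc_elem \<Rightarrow> bool" where
  "inc_rel V E a b \<longleftrightarrow> (\<exists>v e. a = VElem v \<and> b = EElem e \<and> v \<in> V \<and> e \<in> E \<and> v \<in> e)"

text \<open>First-order variables and set variables are named by natural numbers
  (two separate name spaces).\<close>
datatype mso =
    Eq nat nat
  | Mem nat nat
  | Rel nat nat
  | Neg mso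
  | Conj mso mso
  | Disj mso mso
  | Ex1 nat mso
  | All1 nat mso
  | Ex2 nat mso
  | All2 nat mso

fun sat :: "'a set \<Rightarrow> ('a \<Rightarrow> 'a \<Rightarrow> bool) \<Rightarrow> (nat \<Rightarrow> 'a) \<Rightarrow> (nat \<Rightarrow> 'a set) \<Rightarrow> mso \<Rightarrow> bool" where
  "sat U R \<alpha> \<beta> (Eq x y) = (\<alpha> x = \<alpha> y)"
| "sat U R \<alpha> \<beta> (Mem x X) = (\<alpha> x \<in> \<beta> X)"
| "sat U R \<alpha> \<beta> (Rel x y) = R (\<alpha> x) (\<alpha> y)"
| "sat U R \<alpha> \<beta> (Neg \<phi>) = (\<not> sat U R \<alpha> \<beta> \<phi>)"
| "sat U R \<alpha> \<beta> (Conj \<phi> \<psi>) = (sat U R \<alpha> \<beta> \<phi> \<and> sat U R \<alpha> \<beta> \<psi>)"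
| "sat U R \<alpha> \<beta> (Disj \<phi> \<psi>) = (sat U R \<alpha> \<beta> \<phi> \<or> sat U R \<alpha> \<beta> \<psi>)"
| "sat U R \<alpha> \<beta> (Ex1 x \<phi>) = (\<exists>a\<in>U. sat U R (\<alpha>(x := a)) \<beta> \<phi>)"
| "sat U R \<alpha> \<beta> (All1 x \<phi>) = (\<forall>a\<in>U. sat U R (\<alpha>(x := a)) \<beta> \<phi>)"
| "sat U R \<alpha> \<beta> (Ex2 X \<phi>) = (\<exists>A. A \<subseteq> U \<and> sat U R \<alpha> (\<beta>(X := A)) \<phi>)"
| "sat U R \<alpha> \<beta> (All2 X \<phi>) = (\<forall>A. A \<subseteq> U \<longrightarrow> sat U R \<alpha> (\<beta>(X := A)) \<phi>)"

fun qr :: "mso \<Rightarrow> nat" where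
  "qr (Eq _ _) = 0"
| "qr (Mem _ _) = 0"
| "qr (Rel _ _) = 0"
| "qr (Neg \<phi>) = qr \<phi>"
| "qr (Conj \<phi> \<psi>) = max (qr \<phi>) (qr \<psi>)"
| "qr (Disj \<phi> \<psi>) = max (qr \<phi>) (qr \<psi>)"
| "qr (Ex1 _ \<phi>) = Suc (qr \<phi>)"
| "qr (All1 _ \<phi>) = Suc (qr \<phi>)"
| "qr (Ex2 _ \<phi>) = Suc (qr \<phi>)"
| "qr (All2 _ \<phi>) = Suc (qr \<phi>)"

fun fv1 :: "mso \<Rightarrow> nat set" where
  "fv1 (Eq x y) = {x, y}"
| "fv1 (Mem x X) = {x}"
| "fv1 (Rel x y) = {x, y}"
| "fv1 (Neg \<phi>) = fv1 \<phi>"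
| "fv1 (Conj \<phi> \<psi>) = fv1 \<phi> \<union> fv1 \<psi>"
| "fv1 (Disj \<phi> \<psi>) = fv1 \<phi> \<union> fv1 \<psi>"
| "fv1 (Ex1 x \<phi>) = fv1 \<phi> - {x}"
| "fv1 (All1 x \<phi>) = fv1 \<phi> - {x}"
| "fv1 (Ex2 _ \<phi>) = fv1 \<phi>"
| "fv1 (All2 _ \<phi>) = fv1 \<phi>"

fun fv2 :: "mso \<Rightarrow> nat set" where
  "fv2 (Eq x y) = {}"
| "fv2 (Mem x X) = {X}"
| "fv2 (Rel x y) = {}"
| "fv2 (Neg \<phi>) = fv2 \<phi>"
| "fv2 (Conj \<phi> \<psi>) = fv2 \<phi> \<union> fv2 \<psi>"
| "fv2 (Disj \<phi> \<psi>) = fv2 \<phi> \<union> fv2 \<psi>"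
| "fv2 (Ex1 _ \<phi>) = fv2 \<phi>"
| "fv2 (All1 _ \<phi>) = fv2 \<phi>"
| "fv2 (Ex2 X \<phi>) = fv2 \<phi> - {X}"
| "fv2 (All2 X \<phi>) = fv2 \<phi> - {X}"

text \<open>The binary relation defined by \<phi>(x,y;P_0..P_{n-1}) in a structure,
  where x is first-order variable 0, y is first-order variable 1, and
  P_i is set variable i.\<close>
definition defined_rel :: "'a set \<Rightarrow> ('a \<Rightarrow> 'a \<Rightarrow> bool) \<Rightarrow> mso \<Rightarrow> 'a set list \<Rightarrow> ('a \<times> 'a) set" where
  "defined_rel U R \<phi> Ps =
     {(a, b). a \<in> U \<and> b \<in> U \<and>
        sat U R (\<lambda>i. if i = 0 then a else b) (\<lambda>i. if i < length Ps then Ps ! i else {}) \<phi>}"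

definition mso_orderable :: "nat \<Rightarrow> nat \<Rightarrow> 'a set \<Rightarrow> ('a \<Rightarrow> 'a \<Rightarrow> bool) \<Rightarrow> bool" where
  "mso_orderable n m U R \<longleftrightarrow>
     (\<exists>\<phi> Ps. qr \<phi> \<le> m \<and> fv1 \<phi> \<subseteq> {0, 1} \<and> fv2 \<phi> \<subseteq> {..<n} \<and>
        length Ps = n \<and> (\<forall>P\<in>set Ps. P \<subseteq> U) \<and>
        linear_order_on U (defined_rel U R \<phi> Ps))"

fun exp_tower :: "nat \<Rightarrow> nat \<Rightarrow> nat" where
  "exp_tower 0 n = n"
| "exp_tower (Suc k) n = 2 ^ exp_tower k n"

section \<open>Computability via Kleene's partial recursive functions\<close>

datatype recf = Zero | Succ | Proj nat | Comp recf "recf list" | PrimRec recf recf | Minim recf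

inductive eval :: "recf \<Rightarrow> nat list \<Rightarrow> nat \<Rightarrow> bool" where
  eval_Zero: "eval Zero xs 0"
| eval_Succ: "eval Succ (x # xs) (Suc x)"
| eval_Proj: "i < length xs \<Longrightarrow> eval (Proj i) xs (xs ! i)"
| eval_Comp: "length ys = length gs \<Longrightarrow> (\<forall>j < length gs. eval (gs ! j) xs (ys ! j)) \<Longrightarrow>
     eval f ys z \<Longrightarrow> eval (Comp f gs) xs z"
| eval_PrimRec0: "eval f xs y \<Longrightarrow> eval (PrimRec f g) (0 # xs) y"
| eval_PrimRecS: "eval (PrimRec f g) (n # xs) y \<Longrightarrow> eval g (n # y # xs) z \<Longrightarrow>
     eval (PrimRec f g) (Suc n # xs) z"
| eval_Minim: "eval f (n # xs) 0 \<Longrightarrow> (\<forall>i < n. \<exists>y. y > 0 \<and> eval f (i # xs) y) \<Longrightarrow>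
     eval (Minim f) xs n"

definition computable2 :: "(nat \<Rightarrow> nat \<Rightarrow> nat) \<Rightarrow> bool" where
  "computable2 g \<longleftrightarrow> (\<exists>c. \<forall>n m. eval c [n, m] (g n m))"

end

theory Submission
  imports Defs
begin

text \<open>Fix S with at most k vertices. Each component C of G - S yields a block of
  \<lceil>G\<rceil>, its vertices together with the edges meeting it; distinct blocks are disjoint,
  not incident to each other, and touch the rest of \<lceil>G\<rceil> only in S. From the ordering
  formula \<phi> one obtains a formula \<psi>(X, Y) of rank m + 2 saying that the least element of
  X \<union> Y lies in X, and after renaming bound variables \<psi> uses only m + 2 first-order and
  n + m + 2 set variables. The (m + 2)-round MSO game played inside a single block, with
  the vertices of S as constants, then has at most a tower of height O((n + m)^2) in k
  many classes. If two components had blocks of the same class, a composition argument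
  shows that \<psi> cannot tell X := C1, Y := C2 from X := C2, Y := C1, although the least
  element of C1 \<union> C2 lies in exactly one of them. Hence G - S has at most the square of
  that number of components.\<close>

section \<open>Renaming bound variables by depth\<close>

fun vars1 :: "mso \<Rightarrow> nat set" where
  "vars1 (Eq x y) = {x, y}"
| "vars1 (Mem x X) = {x}"
| "vars1 (Rel x y) = {x, y}"
| "vars1 (Neg \<phi>) = vars1 \<phi>"
| "vars1 (Conj \<phi> \<psi>) = vars1 \<phi> \<union> vars1 \<psi>"
| "vars1 (Disj \<phi> \<psi>) = vars1 \<phi> \<union> vars1 \<psi>"
| "vars1 (Ex1 x \<phi>) = insert x (vars1 \<phi>)"
| "vars1 (All1 x \<phi>) = insert x (vars1 \<phi>)"
| "vars1 (Ex2 _ \<phi>) = vars1 \<phi>"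
| "vars1 (All2 _ \<phi>) = vars1 \<phi>"

fun vars2 :: "mso \<Rightarrow> nat set" where
  "vars2 (Eq x y) = {}"
| "vars2 (Mem x X) = {X}"
| "vars2 (Rel x y) = {}"
| "vars2 (Neg \<phi>) = vars2 \<phi>"
| "vars2 (Conj \<phi> \<psi>) = vars2 \<phi> \<union> vars2 \<psi>"
| "vars2 (Disj \<phi> \<psi>) = vars2 \<phi> \<union> vars2 \<psi>"
| "vars2 (Ex1 _ \<phi>) = vars2 \<phi>"
| "vars2 (All1 _ \<phi>) = vars2 \<phi>"
| "vars2 (Ex2 X \<phi>) = insert X (vars2 \<phi>)"
| "vars2 (All2 X \<phi>) = insert X (vars2 \<phi>)"

text \<open>A formula of rank m with free variables
  among 0, 1 and free set variables below b thus uses only 2 + m resp. b + m names.\<close>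
fun rename_by_depth :: "nat \<Rightarrow> (nat \<Rightarrow> nat) \<Rightarrow> (nat \<Rightarrow> nat) \<Rightarrow> nat \<Rightarrow> mso \<Rightarrow> mso" where
  "rename_by_depth b \<rho> \<sigma> d (Eq x y) = Eq (\<rho> x) (\<rho> y)"
| "rename_by_depth b \<rho> \<sigma> d (Mem x X) = Mem (\<rho> x) (\<sigma> X)"
| "rename_by_depth b \<rho> \<sigma> d (Rel x y) = Rel (\<rho> x) (\<rho> y)"
| "rename_by_depth b \<rho> \<sigma> d (Neg \<phi>) = Neg (rename_by_depth b \<rho> \<sigma> d \<phi>)"
| "rename_by_depth b \<rho> \<sigma> d (Conj \<phi> \<psi>) = Conj (rename_by_depth b \<rho> \<sigma> d \<phi>) (rename_by_depth b \<rho> \<sigma> d \<psi>)"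
| "rename_by_depth b \<rho> \<sigma> d (Disj \<phi> \<psi>) = Disj (rename_by_depth b \<rho> \<sigma> d \<phi>) (rename_by_depth b \<rho> \<sigma> d \<psi>)"
| "rename_by_depth b \<rho> \<sigma> d (Ex1 x \<phi>) = Ex1 (2 + d) (rename_by_depth b (\<rho>(x := 2 + d)) \<sigma> (Suc d) \<phi>)"
| "rename_by_depth b \<rho> \<sigma> d (All1 x \<phi>) = All1 (2 + d) (rename_by_depth b (\<rho>(x := 2 + d)) \<sigma> (Suc d) \<phi>)"
| "rename_by_depth b \<rho> \<sigma> d (Ex2 X \<phi>) = Ex2 (b + d) (rename_by_depth b \<rho> (\<sigma>(X := b + d)) (Suc d) \<phi>)"
| "rename_by_depth b \<rho> \<sigma> d (All2 X \<phi>) = All2 (b + d) (rename_by_depth b \<rho> (\<sigma>(X := b + d)) (Suc d) \<phi>)"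

lemma sat_rename_by_depth:
  assumes "\<forall>x\<in>fv1 \<phi>. \<rho> x < 2 + d \<and> \<alpha>' (\<rho> x) = \<alpha> x"
    and "\<forall>X\<in>fv2 \<phi>. \<sigma> X < b + d \<and> \<beta>' (\<sigma> X) = \<beta> X"
  shows "sat U R \<alpha>' \<beta>' (rename_by_depth b \<rho> \<sigma> d \<phi>) = sat U R \<alpha> \<beta> \<phi>"
  using assms
proof (induction \<phi> arbitrary: \<rho> \<sigma> d \<alpha> \<alpha>' \<beta> \<beta>')
  case (Ex1 x \<phi>)
  have "sat U R (\<alpha>'(2 + d := a)) \<beta>' (rename_by_depth b (\<rho>(x := 2 + d)) \<sigma> (Suc d) \<phi>)
      = sat U R (\<alpha>(x := a)) \<beta> \<phi>" for a
    by (rule Ex1.IH) (use Ex1.prems in \<open>auto simp: Ball_def\<close>)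
  then show ?case by simp
next
  case (All1 x \<phi>)
  have "sat U R (\<alpha>'(2 + d := a)) \<beta>' (rename_by_depth b (\<rho>(x := 2 + d)) \<sigma> (Suc d) \<phi>)
      = sat U R (\<alpha>(x := a)) \<beta> \<phi>" for a
    by (rule All1.IH) (use All1.prems in \<open>auto simp: Ball_def\<close>)
  then show ?case by simp
next
  case (Ex2 X \<phi>)
  have "sat U R \<alpha>' (\<beta>'(b + d := A)) (rename_by_depth b \<rho> (\<sigma>(X := b + d)) (Suc d) \<phi>)
      = sat U R \<alpha> (\<beta>(X := A)) \<phi>" for A
    by (rule Ex2.IH) (use Ex2.prems in \<open>auto simp: Ball_def\<close>)
  then show ?case by simp
next
  case (All2 X \<phi>)
  have "sat U R \<alpha>' (\<beta>'(b + d := A)) (rename_by_depth b \<rho> (\<sigma>(X := b + d)) (Suc d) \<phi>)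
      = sat U R \<alpha> (\<beta>(X := A)) \<phi>" for A
    by (rule All2.IH) (use All2.prems in \<open>auto simp: Ball_def\<close>)
  then show ?case by simp
next
  case (Conj \<phi> \<psi>)
  have "sat U R \<alpha>' \<beta>' (rename_by_depth b \<rho> \<sigma> d \<phi>) = sat U R \<alpha> \<beta> \<phi>"
    by (rule Conj.IH(1)) (use Conj.prems in auto)
  moreover have "sat U R \<alpha>' \<beta>' (rename_by_depth b \<rho> \<sigma> d \<psi>) = sat U R \<alpha> \<beta> \<psi>"
    by (rule Conj.IH(2)) (use Conj.prems in auto)
  ultimately show ?case by simp
next
  case (Disj \<phi> \<psi>)
  have "sat U R \<alpha>' \<beta>' (rename_by_depth b \<rho> \<sigma> d \<phi>) = sat U R \<alpha> \<beta> \<phi>"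
    by (rule Disj.IH(1)) (use Disj.prems in auto)
  moreover have "sat U R \<alpha>' \<beta>' (rename_by_depth b \<rho> \<sigma> d \<psi>) = sat U R \<alpha> \<beta> \<psi>"
    by (rule Disj.IH(2)) (use Disj.prems in auto)
  ultimately show ?case by simp
next
  case (Neg \<phi>)
  have "sat U R \<alpha>' \<beta>' (rename_by_depth b \<rho> \<sigma> d \<phi>) = sat U R \<alpha> \<beta> \<phi>"
    by (rule Neg.IH) (use Neg.prems in auto)
  then show ?case by simp
qed simp_all

lemma qr_rename_by_depth [simp]: "qr (rename_by_depth b \<rho> \<sigma> d \<phi>) = qr \<phi>"
  by (induction \<phi> arbitrary: \<rho> \<sigma> d) auto

lemma vars1_rename_by_depth:
  "\<rho> ` fv1 \<phi> \<subseteq> {..<2 + d} \<Longrightarrow> vars1 (rename_by_depth b \<rho> \<sigma> d \<phi>) \<subseteq> {..<2 + d + qr \<phi>}"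
proof (induction \<phi> arbitrary: \<rho> \<sigma> d)
  case (Ex1 x \<phi>)
  then show ?case using Ex1.IH[where \<rho>="\<rho>(x := 2 + d)" and \<sigma>=\<sigma> and d="Suc d"]
    by (fastforce simp: subset_iff)
next
  case (All1 x \<phi>)
  then show ?case using All1.IH[where \<rho>="\<rho>(x := 2 + d)" and \<sigma>=\<sigma> and d="Suc d"]
    by (fastforce simp: subset_iff)
next
  case (Ex2 X \<phi>)
  then show ?case using Ex2.IH[where \<rho>=\<rho> and \<sigma>="\<sigma>(X := b + d)" and d="Suc d"]
    by (fastforce simp: subset_iff)
next
  case (All2 X \<phi>)
  then show ?case using All2.IH[where \<rho>=\<rho> and \<sigma>="\<sigma>(X := b + d)" and d="Suc d"]
    by (fastforce simp: subset_iff)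
next
  case (Conj \<phi> \<psi>)
  then show ?case
    using Conj.IH(1,2)[where \<rho>=\<rho> and \<sigma>=\<sigma> and d=d] by (fastforce simp: subset_iff)
next
  case (Disj \<phi> \<psi>)
  then show ?case
    using Disj.IH(1,2)[where \<rho>=\<rho> and \<sigma>=\<sigma> and d=d] by (fastforce simp: subset_iff)
qed auto

lemma vars2_rename_by_depth:
  "\<sigma> ` fv2 \<phi> \<subseteq> {..<b + d} \<Longrightarrow> vars2 (rename_by_depth b \<rho> \<sigma> d \<phi>) \<subseteq> {..<b + d + qr \<phi>}"
proof (induction \<phi> arbitrary: \<rho> \<sigma> d)
  case (Ex1 x \<phi>)
  then show ?case using Ex1.IH[where \<rho>="\<rho>(x := 2 + d)" and \<sigma>=\<sigma> and d="Suc d"]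
    by (fastforce simp: subset_iff)
next
  case (All1 x \<phi>)
  then show ?case using All1.IH[where \<rho>="\<rho>(x := 2 + d)" and \<sigma>=\<sigma> and d="Suc d"]
    by (fastforce simp: subset_iff)
next
  case (Ex2 X \<phi>)
  then show ?case using Ex2.IH[where \<rho>=\<rho> and \<sigma>="\<sigma>(X := b + d)" and d="Suc d"]
    by (fastforce simp: subset_iff)
next
  case (All2 X \<phi>)
  then show ?case using All2.IH[where \<rho>=\<rho> and \<sigma>="\<sigma>(X := b + d)" and d="Suc d"]
    by (fastforce simp: subset_iff)
next
  case (Conj \<phi> \<psi>)
  then show ?case
    using Conj.IH(1,2)[where \<rho>=\<rho> and \<sigma>=\<sigma> and d=d] by (fastforce simp: subset_iff)
next
  case (Disj \<phi> \<psi>)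
  then show ?case
    using Disj.IH(1,2)[where \<rho>=\<rho> and \<sigma>=\<sigma> and d=d] by (fastforce simp: subset_iff)
qed auto

lemma fv1_rename_by_depth: "fv1 (rename_by_depth b \<rho> \<sigma> d \<phi>) \<subseteq> \<rho> ` fv1 \<phi>"
  by (induction \<phi> arbitrary: \<rho> \<sigma> d) (fastforce simp: image_iff)+

section \<open>The game inside a block\<close>

text \<open>A position (A, F, \<alpha>, \<beta>) is the part of an assignment that lives in the block A:
  F is the set of first-order variables whose value lies in A.\<close>
type_synonym 'a position = "'a set \<times> nat set \<times> (nat \<Rightarrow> 'a) \<times> (nat \<Rightarrow> 'a set)"

fun unassign :: "nat \<Rightarrow> 'a position \<Rightarrow> 'a position" where
  "unassign v (A, F, \<alpha>, \<beta>) = (A, F - {v}, \<alpha>, \<beta>)"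

fun assign :: "nat \<Rightarrow> 'a \<Rightarrow> 'a position \<Rightarrow> 'a position" where
  "assign v a (A, F, \<alpha>, \<beta>) = (A, insert v F, \<alpha>(v := a), \<beta>)"

fun assign_set :: "nat \<Rightarrow> 'a set \<Rightarrow> 'a position \<Rightarrow> 'a position" where
  "assign_set X S (A, F, \<alpha>, \<beta>) = (A, F, \<alpha>, \<beta>(X := S))"

definition block_position :: "'a set \<Rightarrow> nat set \<Rightarrow> (nat \<Rightarrow> 'a) \<Rightarrow> (nat \<Rightarrow> 'a set) \<Rightarrow> 'a position" where
  "block_position C D \<alpha> \<beta> = (C, {x \<in> D. \<alpha> x \<in> C}, \<alpha>, \<beta>)"

lemma fst_block_position [simp]: "fst (block_position C D \<alpha> \<beta>) = C"
  by (simp add: block_position_def)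

lemma assign_set_block_position [simp]:
  "assign_set X S (block_position C D \<alpha> \<beta>) = block_position C D \<alpha> (\<beta>(X := S))"
  by (simp add: block_position_def)

lemma assign_block_position:
  "a \<in> C \<Longrightarrow> assign v a (block_position C D \<alpha> \<beta>) = block_position C (insert v D) (\<alpha>(v := a)) \<beta>"
  by (auto simp: block_position_def)

text \<open>game_equiv r p q: Duplicator survives r rounds of the MSO Ehrenfeucht-Fraisse game
  played inside the blocks of p and q, with first-order variables from N1, set variables
  from N2, and the elements of Z outside the blocks acting as constants.\<close>
locale block_game =
  fixes R :: "'a \<Rightarrow> 'a \<Rightarrow> bool" and Z :: "'a set" and N1 N2 :: "nat set"
begin

fun atomic_equiv :: "'a position \<Rightarrow> 'a position \<Rightarrow> bool" where
  "atomic_equiv (A, F, \<alpha>, \<beta>) (B, F', \<alpha>', \<beta>') \<longleftrightarrow>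
    F = F' \<and>
    (\<forall>x\<in>F. \<forall>y\<in>F. (\<alpha> x = \<alpha> y \<longleftrightarrow> \<alpha>' x = \<alpha>' y) \<and> (R (\<alpha> x) (\<alpha> y) \<longleftrightarrow> R (\<alpha>' x) (\<alpha>' y))) \<and>
    (\<forall>x\<in>F. \<forall>X\<in>N2. \<alpha> x \<in> \<beta> X \<longleftrightarrow> \<alpha>' x \<in> \<beta>' X) \<and>
    (\<forall>x\<in>F. \<forall>s\<in>Z. (R (\<alpha> x) s \<longleftrightarrow> R (\<alpha>' x) s) \<and> (R s (\<alpha> x) \<longleftrightarrow> R s (\<alpha>' x)))"

fun game_equiv :: "nat \<Rightarrow> 'a position \<Rightarrow> 'a position \<Rightarrow> bool" where
  "game_equiv 0 p q \<longleftrightarrow> atomic_equiv p q"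
| "game_equiv (Suc r) p q \<longleftrightarrow>
    game_equiv r p q \<and>
    (\<forall>v\<in>N1. game_equiv r (unassign v p) (unassign v q)) \<and>
    (\<forall>v\<in>N1. \<forall>a\<in>fst p. \<exists>b\<in>fst q. game_equiv r (assign v a p) (assign v b q)) \<and>
    (\<forall>v\<in>N1. \<forall>b\<in>fst q. \<exists>a\<in>fst p. game_equiv r (assign v a p) (assign v b q)) \<and>
    (\<forall>X\<in>N2. \<forall>S\<subseteq>fst p. \<exists>T\<subseteq>fst q. game_equiv r (assign_set X S p) (assign_set X T q)) \<and>
    (\<forall>X\<in>N2. \<forall>T\<subseteq>fst q. \<exists>S\<subseteq>fst p. game_equiv r (assign_set X S p) (assign_set X T q))"

lemma game_equiv_refl: "game_equiv r p p"
proof (induction r arbitrary: p)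
  case 0
  then show ?case by (cases p) simp
next
  case (Suc r)
  then show ?case unfolding game_equiv.simps by blast
qed

lemma game_equiv_sym: "game_equiv r p q \<Longrightarrow> game_equiv r q p"
proof (induction r arbitrary: p q)
  case 0
  then show ?case by (cases p; cases q) auto
next
  case (Suc r)
  then show ?case unfolding game_equiv.simps by meson
qed

lemma game_equiv_trans: "game_equiv r p q \<Longrightarrow> game_equiv r q s \<Longrightarrow> game_equiv r p s"
proof (induction r arbitrary: p q s)
  case 0
  then show ?case by (cases p; cases q; cases s) simp
next
  case (Suc r)
  then show ?case unfolding game_equiv.simps by meson
qed

lemma game_equiv_atomic_equiv: "game_equiv r p q \<Longrightarrow> atomic_equiv p q"
  by (induction r) auto

fun same_view :: "'a position \<Rightarrow> 'a position \<Rightarrow> bool" where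
  "same_view (A, F, \<alpha>, \<beta>) (A', F', \<alpha>', \<beta>') \<longleftrightarrow>
    A' = A \<and> F' = F \<and> (\<forall>x\<in>F. \<alpha>' x = \<alpha> x) \<and>
    (\<forall>X\<in>N2. \<forall>x\<in>F. \<alpha> x \<in> \<beta>' X \<longleftrightarrow> \<alpha> x \<in> \<beta> X) \<and> (\<forall>X\<in>N2. \<beta>' X \<inter> A = \<beta> X \<inter> A)"

lemma same_view_moves:
  assumes "same_view p p'"
  shows "same_view (unassign v p) (unassign v p')" "same_view (assign_set X S p) (assign_set X S p')"
    and "a \<in> fst p \<Longrightarrow> same_view (assign v a p) (assign v a p')"
  using assms by (cases p; cases p'; auto)+

lemma same_view_fst: "same_view p p' \<Longrightarrow> fst p' = fst p"
  by (cases p; cases p') auto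

text \<open>Duplicator wins by copying every move of Spoiler.\<close>
lemma same_view_game_equiv: "same_view p p' \<Longrightarrow> game_equiv r p p'"
proof (induction r arbitrary: p p')
  case 0
  then show ?case by (cases p; cases p') auto
next
  case (Suc r)
  note copy = same_view_moves[OF Suc.prems, THEN Suc.IH]
  have fst: "fst p' = fst p" using Suc.prems by (rule same_view_fst)
  show ?case
    unfolding game_equiv.simps fst
  proof (intro conjI ballI allI impI)
    show "game_equiv r p p'" using Suc.IH[OF Suc.prems] .
    show "game_equiv r (unassign v p) (unassign v p')" for v using copy(1) .
    show "\<exists>b\<in>fst p. game_equiv r (assign v a p) (assign v b p')" if "a \<in> fst p" for v a
      using copy(3) that by blast
    show "\<exists>a\<in>fst p. game_equiv r (assign v a p) (assign v b p')" if "b \<in> fst p" for v b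
      using copy(3) that by blast
    show "\<exists>T\<subseteq>fst p. game_equiv r (assign_set X S p) (assign_set X T p')" if "S \<subseteq> fst p" for X S
      using copy(2) that by blast
    show "\<exists>S\<subseteq>fst p. game_equiv r (assign_set X S p) (assign_set X T p')" if "T \<subseteq> fst p" for X T
      using copy(2) that by blast
  qed
qed

lemma game_equiv_same_view: "game_equiv r p q \<Longrightarrow> same_view p p' \<Longrightarrow> game_equiv r p' q"
  using same_view_game_equiv game_equiv_sym game_equiv_trans by blast

lemma game_equiv_same_view_right: "game_equiv r p q \<Longrightarrow> same_view q q' \<Longrightarrow> game_equiv r p q'"
  using game_equiv_same_view game_equiv_sym by blast

lemma game_equiv_Suc_unassign:
  "game_equiv (Suc r) p q \<Longrightarrow> v \<in> N1 \<Longrightarrow> game_equiv r (unassign v p) (unassign v q)"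
  by simp

lemma game_equiv_Suc_assign:
  "game_equiv (Suc r) p q \<Longrightarrow> v \<in> N1 \<Longrightarrow> a \<in> fst p \<Longrightarrow> \<exists>b\<in>fst q. game_equiv r (assign v a p) (assign v b q)"
  by simp

lemma game_equiv_Suc_assign_set:
  "game_equiv (Suc r) p q \<Longrightarrow> X \<in> N2 \<Longrightarrow> S \<subseteq> fst p \<Longrightarrow>
    \<exists>T\<subseteq>fst q. game_equiv r (assign_set X S p) (assign_set X T q)"
  by simp

lemma game_equiv_assign_outside:
  assumes "game_equiv (Suc r) (block_position C D \<alpha> \<beta>) (block_position C' D \<alpha>' \<beta>')"
    and "v \<in> N1" "a \<notin> C" "a' \<notin> C'"
  shows "game_equiv r (block_position C (insert v D) (\<alpha>(v := a)) \<beta>)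
      (block_position C' (insert v D) (\<alpha>'(v := a')) \<beta>')"
proof -
  have equiv: "game_equiv r (unassign v (block_position C D \<alpha> \<beta>))
      (unassign v (block_position C' D \<alpha>' \<beta>'))"
    using assms(1,2) by (rule game_equiv_Suc_unassign)
  have view: "same_view (unassign v (block_position E D \<gamma> \<delta>))
      (block_position E (insert v D) (\<gamma>(v := e)) \<delta>)"
    if "e \<notin> E" for E \<gamma> \<delta> e
    using that by (auto simp: block_position_def)
  show ?thesis
    using game_equiv_same_view[OF equiv view[OF assms(3)]] view[OF assms(4)]
    by (rule game_equiv_same_view_right)
qed

lemma game_equiv_assign_inside:
  assumes "game_equiv (Suc r) (block_position C D \<alpha> \<beta>) (block_position C' D \<alpha>' \<beta>')"
    and "v \<in> N1" "a \<in> C"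
  shows "\<exists>a'\<in>C'. game_equiv r (block_position C (insert v D) (\<alpha>(v := a)) \<beta>)
    (block_position C' (insert v D) (\<alpha>'(v := a')) \<beta>')"
  using game_equiv_Suc_assign[OF assms(1,2), of a] assms(3) by (auto simp: assign_block_position)

lemma game_equiv_assign_set:
  assumes "game_equiv (Suc r) (block_position C D \<alpha> \<beta>) (block_position C' D \<alpha>' \<beta>')" and "X \<in> N2"
  shows "\<exists>T'\<subseteq>C'. game_equiv r (block_position C D \<alpha> (\<beta>(X := T)))
      (block_position C' D \<alpha>' (\<beta>'(X := T')))"
proof -
  obtain T' where "T' \<subseteq> C'"
    and "game_equiv r (block_position C D \<alpha> (\<beta>(X := T \<inter> C))) (block_position C' D \<alpha>' (\<beta>'(X := T')))"
    using game_equiv_Suc_assign_set[OF assms, of "T \<inter> C"] by auto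
  moreover from this(2) have "game_equiv r (block_position C D \<alpha> (\<beta>(X := T)))
      (block_position C' D \<alpha>' (\<beta>'(X := T')))"
    by (rule game_equiv_same_view) (auto simp: block_position_def)
  ultimately show ?thesis by blast
qed

lemma atomic_equiv_block_position:
  assumes "atomic_equiv (block_position C D \<alpha> \<beta>) (block_position C' D \<alpha>' \<beta>')" and "x \<in> D" "\<alpha> x \<in> C"
  shows "y \<in> D \<Longrightarrow> \<alpha> y \<in> C \<Longrightarrow> (\<alpha> x = \<alpha> y \<longleftrightarrow> \<alpha>' x = \<alpha>' y) \<and> (R (\<alpha> x) (\<alpha> y) \<longleftrightarrow> R (\<alpha>' x) (\<alpha>' y))"
    and "X \<in> N2 \<Longrightarrow> \<alpha> x \<in> \<beta> X \<longleftrightarrow> \<alpha>' x \<in> \<beta>' X"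
    and "s \<in> Z \<Longrightarrow> (R (\<alpha> x) s \<longleftrightarrow> R (\<alpha>' x) s) \<and> (R s (\<alpha> x) \<longleftrightarrow> R s (\<alpha>' x))"
  using assms by (auto simp: block_position_def)

end

section \<open>Counting game classes\<close>

lemma card_image_le_card_image:
  assumes "finite (g ` P)" and "\<And>p q. p \<in> P \<Longrightarrow> q \<in> P \<Longrightarrow> g p = g q \<Longrightarrow> f p = f q"
  shows "finite (f ` P)" and "card (f ` P) \<le> card (g ` P)"
proof -
  have "f p = f (inv_into P g (g p))" if "p \<in> P" for p
  proof -
    have "g p \<in> g ` P" using that by blast
    then show ?thesis
      using assms(2)[OF that inv_into_into[of "g p" g P] f_inv_into_f[of "g p" g P, symmetric]]
      by blast
  qed
  then have "f ` P = (\<lambda>y. f (inv_into P g y)) ` g ` P"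
    by (simp add: image_image cong: image_cong)
  then show "finite (f ` P)" and "card (f ` P) \<le> card (g ` P)"
    using assms(1) card_image_le by auto
qed

lemma image_pairs_eqD:
  assumes "(\<lambda>(v, a). (v, f v a)) ` (I \<times> A) = (\<lambda>(v, b). (v, g v b)) ` (I \<times> B)" and "v \<in> I" "a \<in> A"
  shows "\<exists>b\<in>B. f v a = g v b"
proof -
  have "(v, f v a) \<in> (\<lambda>(v, b). (v, g v b)) ` (I \<times> B)"
    unfolding assms(1)[symmetric] using assms(2,3) by force
  then show ?thesis by auto
qed

context block_game
begin

definition game_class :: "nat \<Rightarrow> 'a position \<Rightarrow> 'a position set" where
  "game_class r p = {q. game_equiv r p q}"

lemma game_class_eq_iff: "game_class r p = game_class r q \<longleftrightarrow> game_equiv r p q"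
  unfolding game_class_def using game_equiv_refl game_equiv_sym game_equiv_trans by blast

definition positions :: "'a position set" where
  "positions = {p. fst (snd p) \<subseteq> N1}"

fun atomic_type :: "'a position \<Rightarrow> nat set \<times> (nat \<times> nat) set \<times> (nat \<times> nat) set
    \<times> (nat \<times> nat) set \<times> (nat \<times> 'a) set \<times> (nat \<times> 'a) set" where
  "atomic_type (A, F, \<alpha>, \<beta>) =
    (F, {(x, y). x \<in> F \<and> y \<in> F \<and> \<alpha> x = \<alpha> y}, {(x, y). x \<in> F \<and> y \<in> F \<and> R (\<alpha> x) (\<alpha> y)},
     {(x, X). x \<in> F \<and> X \<in> N2 \<and> \<alpha> x \<in> \<beta> X}, {(x, s). x \<in> F \<and> s \<in> Z \<and> R (\<alpha> x) s},
     {(x, s). x \<in> F \<and> s \<in> Z \<and> R s (\<alpha> x)})"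

lemma atomic_type_eq_imp_atomic_equiv: "atomic_type p = atomic_type q \<Longrightarrow> atomic_equiv p q"
  by (cases p; cases q) (auto simp: set_eq_iff; metis)

lemma positions_moves:
  assumes "p \<in> positions"
  shows "unassign v p \<in> positions" "v \<in> N1 \<Longrightarrow> assign v a p \<in> positions" "assign_set X S p \<in> positions"
  using assms by (cases p; auto simp: positions_def)+

lemma finite_card_atomic_classes:
  assumes "finite N1" "finite N2" "finite Z"
  shows "finite (game_class 0 ` positions)"
    and "card (game_class 0 ` positions) \<le>
      2 ^ (card N1 + card N1 * card N1 + card N1 * card N1 + card N1 * card N2
        + card N1 * card Z + card N1 * card Z)"
proof -
  let ?T = "Pow N1 \<times> Pow (N1 \<times> N1) \<times> Pow (N1 \<times> N1) \<times> Pow (N1 \<times> N2) \<times> Pow (N1 \<times> Z) \<times> Pow (N1 \<times> Z)"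
  have types: "atomic_type ` positions \<subseteq> ?T"
  proof
    fix t assume "t \<in> atomic_type ` positions"
    then obtain A F \<alpha> \<beta> where "t = atomic_type (A, F, \<alpha>, \<beta>)" "F \<subseteq> N1"
      unfolding positions_def by auto
    then show "t \<in> ?T" by auto
  qed
  have "finite ?T" using assms by simp
  then have fin: "finite (atomic_type ` positions)" using types by (rule finite_subset[rotated])
  have "game_class 0 p = game_class 0 q" if "atomic_type p = atomic_type q" for p q
    using atomic_type_eq_imp_atomic_equiv[OF that] game_class_eq_iff by simp
  then have "finite (game_class 0 ` positions)"
    and "card (game_class 0 ` positions) \<le> card (atomic_type ` positions)"
    using card_image_le_card_image[OF fin] by blast+
  moreover have "card (atomic_type ` positions) \<le> card ?T"
    using types \<open>finite ?T\<close> by (rule card_mono[rotated])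
  ultimately show "finite (game_class 0 ` positions)"
    and "card (game_class 0 ` positions) \<le>
      2 ^ (card N1 + card N1 * card N1 + card N1 * card N1 + card N1 * card N2
        + card N1 * card Z + card N1 * card Z)"
    using assms by (simp_all add: card_cartesian_product card_Pow power_add)
qed

text \<open>Everything Spoiler can reach in one move, up to r-round equivalence.\<close>
definition game_profile :: "nat \<Rightarrow> 'a position \<Rightarrow> 'a position set \<times> (nat \<times> 'a position set) set \<times>
    (nat \<times> 'a position set) set \<times> (nat \<times> 'a position set) set" where
  "game_profile r p =
    (game_class r p, (\<lambda>v. (v, game_class r (unassign v p))) ` N1,
     (\<lambda>(v, a). (v, game_class r (assign v a p))) ` (N1 \<times> fst p),
     (\<lambda>(X, S). (X, game_class r (assign_set X S p))) ` (N2 \<times> Pow (fst p)))"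

lemma game_profile_eq_imp_game_equiv:
  assumes "game_profile r p = game_profile r q"
  shows "game_equiv (Suc r) p q"
proof -
  have cls: "game_class r p = game_class r q"
    and un: "(\<lambda>v. (v, game_class r (unassign v p))) ` N1 = (\<lambda>v. (v, game_class r (unassign v q))) ` N1"
    and as: "(\<lambda>(v, a). (v, game_class r (assign v a p))) ` (N1 \<times> fst p)
      = (\<lambda>(v, b). (v, game_class r (assign v b q))) ` (N1 \<times> fst q)"
    and st: "(\<lambda>(X, S). (X, game_class r (assign_set X S p))) ` (N2 \<times> Pow (fst p))
      = (\<lambda>(X, T). (X, game_class r (assign_set X T q))) ` (N2 \<times> Pow (fst q))"
    using assms unfolding game_profile_def by simp_all
  show ?thesis
    unfolding game_equiv.simps
  proof (intro conjI ballI allI impI)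
    show "game_equiv r p q" using cls game_class_eq_iff by blast
    show "game_equiv r (unassign v p) (unassign v q)" if "v \<in> N1" for v
    proof -
      have "(v, game_class r (unassign v p)) \<in> (\<lambda>v. (v, game_class r (unassign v q))) ` N1"
        unfolding un[symmetric] using that by blast
      then have "game_class r (unassign v p) = game_class r (unassign v q)" by auto
      then show ?thesis by (simp only: game_class_eq_iff)
    qed
    show "\<exists>b\<in>fst q. game_equiv r (assign v a p) (assign v b q)" if "v \<in> N1" "a \<in> fst p" for v a
      using image_pairs_eqD[OF as that] unfolding game_class_eq_iff by blast
    show "\<exists>a\<in>fst p. game_equiv r (assign v a p) (assign v b q)" if "v \<in> N1" "b \<in> fst q" for v b
      using image_pairs_eqD[OF as[symmetric] that] unfolding game_class_eq_iff
      by (blast dest: game_equiv_sym)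
    show "\<exists>T\<subseteq>fst q. game_equiv r (assign_set X S p) (assign_set X T q)" if "X \<in> N2" "S \<subseteq> fst p" for X S
      using image_pairs_eqD[OF st, of X S] that unfolding Pow_iff game_class_eq_iff by blast
    show "\<exists>S\<subseteq>fst p. game_equiv r (assign_set X S p) (assign_set X T q)" if "X \<in> N2" "T \<subseteq> fst q" for X T
      using image_pairs_eqD[OF st[symmetric], of X T] that unfolding Pow_iff game_class_eq_iff
      by (blast dest: game_equiv_sym)
  qed
qed

lemma finite_card_game_classes_Suc:
  assumes "finite N1" "finite N2" and fin: "finite (game_class r ` positions)"
  defines "c \<equiv> card (game_class r ` positions)"
  shows "finite (game_class (Suc r) ` positions)"
    and "card (game_class (Suc r) ` positions) \<le> 2 ^ ((card N1 + card N1 + card N2 + 1) * c)"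
proof -
  let ?C = "game_class r ` positions"
  let ?T = "?C \<times> Pow (N1 \<times> ?C) \<times> Pow (N1 \<times> ?C) \<times> Pow (N2 \<times> ?C)"
  have profiles: "game_profile r ` positions \<subseteq> ?T"
    unfolding game_profile_def using positions_moves by auto
  have "finite ?T" using assms by simp
  then have fin': "finite (game_profile r ` positions)"
    using profiles by (rule finite_subset[rotated])
  have "game_class (Suc r) p = game_class (Suc r) q" if "game_profile r p = game_profile r q" for p q
    using game_profile_eq_imp_game_equiv[OF that] game_class_eq_iff by blast
  then have "finite (game_class (Suc r) ` positions)"
    and "card (game_class (Suc r) ` positions) \<le> card (game_profile r ` positions)"
    using card_image_le_card_image[OF fin'] by blast+
  moreover have "card (game_profile r ` positions) \<le> card ?T"
    using profiles \<open>finite ?T\<close> by (rule card_mono[rotated])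
  moreover have "card ?T = c * 2 ^ ((card N1 + card N1 + card N2) * c)"
    using assms by (simp add: card_cartesian_product card_Pow power_add algebra_simps)
  moreover have "c * 2 ^ ((card N1 + card N1 + card N2) * c)
      \<le> 2 ^ ((card N1 + card N1 + card N2 + 1) * c)"
    using less_exp[of c] by (simp add: power_add algebra_simps)
  ultimately show "finite (game_class (Suc r) ` positions)"
    and "card (game_class (Suc r) ` positions) \<le> 2 ^ ((card N1 + card N1 + card N2 + 1) * c)"
    by linarith+
qed

end

fun class_bound :: "nat \<Rightarrow> nat \<Rightarrow> nat \<Rightarrow> nat \<Rightarrow> nat" where
  "class_bound n1 n2 k 0 = 2 ^ (n1 + n1 * n1 + n1 * n1 + n1 * n2 + n1 * k + n1 * k)"
| "class_bound n1 n2 k (Suc r) = 2 ^ ((n1 + n1 + n2 + 1) * class_bound n1 n2 k r)"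

context block_game
begin

lemma finite_card_game_classes:
  assumes "finite N1" "finite N2" "finite Z"
  shows "finite (game_class r ` positions) \<and>
    card (game_class r ` positions) \<le> class_bound (card N1) (card N2) (card Z) r"
proof (induction r)
  case 0
  then show ?case using finite_card_atomic_classes[OF assms] by simp
next
  case (Suc r)
  then have fin: "finite (game_class r ` positions)" by blast
  have "card (game_class (Suc r) ` positions)
      \<le> 2 ^ ((card N1 + card N1 + card N2 + 1) * card (game_class r ` positions))"
    by (rule finite_card_game_classes_Suc(2)[OF assms(1,2) fin])
  also have "\<dots> \<le> class_bound (card N1) (card N2) (card Z) (Suc r)"
    using Suc by (simp del: power_Suc add: power_increasing add_mono)
  finally show ?case using finite_card_game_classes_Suc(1)[OF assms(1,2) fin] by blast
qed

text \<open>The type of a block C as seen by formulas whose set variables X and Y are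
  interpreted as C and the empty set, in either order; the other set variables follow \<beta>.
  No first-order variable is assigned, so the value of the assignment is irrelevant.\<close>
definition block_type :: "nat \<Rightarrow> (nat \<Rightarrow> 'a set) \<Rightarrow> nat \<Rightarrow> nat \<Rightarrow> 'a set
    \<Rightarrow> 'a position set \<times> 'a position set" where
  "block_type r \<beta> X Y C =
    (game_class r (block_position C {} undefined (\<beta>(X := C, Y := {}))),
     game_class r (block_position C {} undefined (\<beta>(X := {}, Y := C))))"

lemma block_type_in_classes:
  "block_type r \<beta> X Y C \<in> game_class r ` positions \<times> game_class r ` positions"
  unfolding block_type_def positions_def by (auto simp: block_position_def)

end

section \<open>Swapping two blocks\<close>

text \<open>In the application, A and B are the blocks of two components of G - S and Z
  consists of the vertices in S.\<close>
locale swappable_blocks = block_game R Z N1 N2 for R :: "'a \<Rightarrow> 'a \<Rightarrow> bool" and Z N1 N2 +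
  fixes U A B :: "'a set"
  assumes A_subset: "A \<subseteq> U" and B_subset: "B \<subseteq> U" and disjoint: "A \<inter> B = {}"
    and not_related: "\<And>a b. a \<in> A \<Longrightarrow> b \<in> B \<Longrightarrow> \<not> R a b \<and> \<not> R b a"
    and neighbours_in_Z:
      "\<And>a w. a \<in> A \<union> B \<Longrightarrow> w \<in> U - (A \<union> B) \<Longrightarrow> R a w \<or> R w a \<Longrightarrow> w \<in> Z"
begin

definition swap_partners :: "'a \<Rightarrow> 'a \<Rightarrow> bool" where
  "swap_partners a a' \<longleftrightarrow> a \<in> U \<and> a' \<in> U \<and> (a \<notin> A \<union> B \<longrightarrow> a' = a) \<and>
     (a \<in> A \<longleftrightarrow> a' \<in> B) \<and> (a \<in> B \<longleftrightarrow> a' \<in> A)"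

text \<open>The assignment \<alpha>', \<beta>' arises from \<alpha>, \<beta> on the variables D by exchanging the
  blocks A and B: nothing changes outside A \<union> B, and what \<alpha>, \<beta> do inside A (resp. B)
  is r-round equivalent to what \<alpha>', \<beta>' do inside B (resp. A).\<close>
definition swap_related :: "nat \<Rightarrow> nat set \<Rightarrow> (nat \<Rightarrow> 'a) \<Rightarrow> (nat \<Rightarrow> 'a set) \<Rightarrow>
    (nat \<Rightarrow> 'a) \<Rightarrow> (nat \<Rightarrow> 'a set) \<Rightarrow> bool" where
  "swap_related r D \<alpha> \<beta> \<alpha>' \<beta>' \<longleftrightarrow>
    (\<forall>x\<in>D. swap_partners (\<alpha> x) (\<alpha>' x)) \<and> (\<forall>X. \<beta> X - (A \<union> B) = \<beta>' X - (A \<union> B)) \<and>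
    game_equiv r (block_position A D \<alpha> \<beta>) (block_position B D \<alpha>' \<beta>') \<and>
    game_equiv r (block_position B D \<alpha> \<beta>) (block_position A D \<alpha>' \<beta>')"

lemma swap_partners_sym: "swap_partners a a' \<Longrightarrow> swap_partners a' a"
  unfolding swap_partners_def by blast

lemma swap_related_sym: "swap_related r D \<alpha> \<beta> \<alpha>' \<beta>' \<Longrightarrow> swap_related r D \<alpha>' \<beta>' \<alpha> \<beta>"
  unfolding swap_related_def by (auto intro: swap_partners_sym game_equiv_sym)

lemma swap_related_assign:
  assumes rel: "swap_related (Suc r) D \<alpha> \<beta> \<alpha>' \<beta>'" and "v \<in> N1" "a \<in> U"
  shows "\<exists>a'\<in>U. swap_related r (insert v D) (\<alpha>(v := a)) \<beta> (\<alpha>'(v := a')) \<beta>'"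
proof -
  have eqAB: "game_equiv (Suc r) (block_position A D \<alpha> \<beta>) (block_position B D \<alpha>' \<beta>')"
    and eqBA: "game_equiv (Suc r) (block_position B D \<alpha> \<beta>) (block_position A D \<alpha>' \<beta>')"
    using rel unfolding swap_related_def by blast+
  have extend: "swap_related r (insert v D) (\<alpha>(v := a)) \<beta> (\<alpha>'(v := a')) \<beta>'"
    if "swap_partners a a'"
      and "game_equiv r (block_position A (insert v D) (\<alpha>(v := a)) \<beta>)
          (block_position B (insert v D) (\<alpha>'(v := a')) \<beta>')"
      and "game_equiv r (block_position B (insert v D) (\<alpha>(v := a)) \<beta>)
          (block_position A (insert v D) (\<alpha>'(v := a')) \<beta>')"
    for a'
    using rel that unfolding swap_related_def by simp
  consider "a \<in> A" | "a \<in> B" | "a \<notin> A \<union> B" by blast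
  then show ?thesis
  proof cases
    case 1
    then obtain a' where "a' \<in> B"
      and "game_equiv r (block_position A (insert v D) (\<alpha>(v := a)) \<beta>)
          (block_position B (insert v D) (\<alpha>'(v := a')) \<beta>')"
      using game_equiv_assign_inside[OF eqAB \<open>v \<in> N1\<close>] by blast
    moreover have "a \<notin> B" "a' \<notin> A" using 1 \<open>a' \<in> B\<close> disjoint by auto
    ultimately show ?thesis
      using 1 extend game_equiv_assign_outside[OF eqBA \<open>v \<in> N1\<close>] A_subset B_subset
      unfolding swap_partners_def by blast
  next
    case 2
    then obtain a' where "a' \<in> A"
      and "game_equiv r (block_position B (insert v D) (\<alpha>(v := a)) \<beta>)
          (block_position A (insert v D) (\<alpha>'(v := a')) \<beta>')"
      using game_equiv_assign_inside[OF eqBA \<open>v \<in> N1\<close>] by blast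
    moreover have "a \<notin> A" "a' \<notin> B" using 2 \<open>a' \<in> A\<close> disjoint by auto
    ultimately show ?thesis
      using 2 extend game_equiv_assign_outside[OF eqAB \<open>v \<in> N1\<close>] A_subset B_subset
      unfolding swap_partners_def by blast
  next
    case 3
    then show ?thesis
      using \<open>a \<in> U\<close> extend game_equiv_assign_outside[OF eqAB \<open>v \<in> N1\<close>]
        game_equiv_assign_outside[OF eqBA \<open>v \<in> N1\<close>]
      unfolding swap_partners_def by blast
  qed
qed

text \<open>The new set agrees with T outside A \<union> B and is pieced together from the
  answers of the two block games inside A and B.\<close>
lemma swap_related_assign_set:
  assumes rel: "swap_related (Suc r) D \<alpha> \<beta> \<alpha>' \<beta>'" and "X \<in> N2" and "T \<subseteq> U"
  shows "\<exists>T'\<subseteq>U. swap_related r D \<alpha> (\<beta>(X := T)) \<alpha>' (\<beta>'(X := T'))"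
proof -
  have eqAB: "game_equiv (Suc r) (block_position A D \<alpha> \<beta>) (block_position B D \<alpha>' \<beta>')"
    and eqBA: "game_equiv (Suc r) (block_position B D \<alpha> \<beta>) (block_position A D \<alpha>' \<beta>')"
    using rel unfolding swap_related_def by blast+
  obtain TB where "TB \<subseteq> B"
    and TB: "game_equiv r (block_position A D \<alpha> (\<beta>(X := T))) (block_position B D \<alpha>' (\<beta>'(X := TB)))"
    using game_equiv_assign_set[OF eqAB \<open>X \<in> N2\<close>] by blast
  obtain TA where "TA \<subseteq> A"
    and TA: "game_equiv r (block_position B D \<alpha> (\<beta>(X := T))) (block_position A D \<alpha>' (\<beta>'(X := TA)))"
    using game_equiv_assign_set[OF eqBA \<open>X \<in> N2\<close>] by blast
  define T' where "T' = (T - (A \<union> B)) \<union> TA \<union> TB"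
  have "T' \<subseteq> U" using \<open>T \<subseteq> U\<close> \<open>TA \<subseteq> A\<close> \<open>TB \<subseteq> B\<close> A_subset B_subset unfolding T'_def by blast
  have "T' \<inter> A = TA" "T' \<inter> B = TB" using \<open>TA \<subseteq> A\<close> \<open>TB \<subseteq> B\<close> disjoint unfolding T'_def by blast+
  then have "game_equiv r (block_position A D \<alpha> (\<beta>(X := T))) (block_position B D \<alpha>' (\<beta>'(X := T')))"
    and "game_equiv r (block_position B D \<alpha> (\<beta>(X := T))) (block_position A D \<alpha>' (\<beta>'(X := T')))"
    using game_equiv_same_view_right[OF TB] game_equiv_same_view_right[OF TA]
    by (auto simp: block_position_def)
  moreover have "\<forall>Y. (\<beta>(X := T)) Y - (A \<union> B) = (\<beta>'(X := T')) Y - (A \<union> B)"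
    using rel \<open>TA \<subseteq> A\<close> \<open>TB \<subseteq> B\<close> unfolding swap_related_def T'_def by auto
  ultimately show ?thesis
    using rel \<open>T' \<subseteq> U\<close> unfolding swap_related_def by auto
qed

lemma swap_partners_outside: "swap_partners a a' \<Longrightarrow> a \<notin> A \<union> B \<Longrightarrow> a' = a \<and> a \<in> U - (A \<union> B)"
  unfolding swap_partners_def by blast

lemma swap_partners_A: "swap_partners a a' \<Longrightarrow> a \<in> A \<Longrightarrow> a' \<in> B"
  unfolding swap_partners_def by blast

lemma swap_partners_B: "swap_partners a a' \<Longrightarrow> a \<in> B \<Longrightarrow> a' \<in> A"
  unfolding swap_partners_def by blast

lemma relation_to_outside:
  assumes "a \<in> A \<union> B" "a' \<in> A \<union> B" "w \<in> U - (A \<union> B)"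
    and "w \<in> Z \<Longrightarrow> (R a w \<longleftrightarrow> R a' w) \<and> (R w a \<longleftrightarrow> R w a')"
  shows "(R a w \<longleftrightarrow> R a' w) \<and> (R w a \<longleftrightarrow> R w a')"
  using assms neighbours_in_Z by metis

lemma swap_related_inside_outside:
  assumes rel: "swap_related r D \<alpha> \<beta> \<alpha>' \<beta>'" and "z \<in> D" "w \<in> D" "\<alpha> z \<in> A \<union> B" "\<alpha> w \<notin> A \<union> B"
  shows "(\<alpha> z = \<alpha> w \<longleftrightarrow> \<alpha>' z = \<alpha>' w) \<and>
    (R (\<alpha> z) (\<alpha> w) \<longleftrightarrow> R (\<alpha>' z) (\<alpha>' w)) \<and> (R (\<alpha> w) (\<alpha> z) \<longleftrightarrow> R (\<alpha>' w) (\<alpha>' z))"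
proof -
  have AB: "atomic_equiv (block_position A D \<alpha> \<beta>) (block_position B D \<alpha>' \<beta>')"
    and BA: "atomic_equiv (block_position B D \<alpha> \<beta>) (block_position A D \<alpha>' \<beta>')"
    using rel game_equiv_atomic_equiv unfolding swap_related_def by blast+
  have pz: "swap_partners (\<alpha> z) (\<alpha>' z)" and pw: "swap_partners (\<alpha> w) (\<alpha>' w)"
    using rel assms(2,3) unfolding swap_related_def by auto
  have w: "\<alpha>' w = \<alpha> w" "\<alpha> w \<in> U - (A \<union> B)"
    using swap_partners_outside[OF pw assms(5)] by auto
  have z: "\<alpha>' z \<in> A \<union> B"
    using swap_partners_A[OF pz] swap_partners_B[OF pz] assms(4) by blast
  have "\<alpha> w \<in> Z \<Longrightarrow> (R (\<alpha> z) (\<alpha> w) \<longleftrightarrow> R (\<alpha>' z) (\<alpha> w)) \<and> (R (\<alpha> w) (\<alpha> z) \<longleftrightarrow> R (\<alpha> w) (\<alpha>' z))"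
    using atomic_equiv_block_position(3)[OF AB assms(2)] atomic_equiv_block_position(3)[OF BA assms(2)]
      assms(4) by blast
  then have "(R (\<alpha> z) (\<alpha> w) \<longleftrightarrow> R (\<alpha>' z) (\<alpha>' w)) \<and> (R (\<alpha> w) (\<alpha> z) \<longleftrightarrow> R (\<alpha>' w) (\<alpha>' z))"
    unfolding w(1) by (rule relation_to_outside[OF assms(4) z w(2)])
  moreover have "\<alpha> z \<noteq> \<alpha> w" "\<alpha>' z \<noteq> \<alpha>' w" using assms(4,5) z w by auto
  ultimately show ?thesis by simp
qed

lemma swap_related_atomic:
  assumes rel: "swap_related r D \<alpha> \<beta> \<alpha>' \<beta>'" and "x \<in> D" "y \<in> D"
  shows "(\<alpha> x = \<alpha> y \<longleftrightarrow> \<alpha>' x = \<alpha>' y) \<and> (R (\<alpha> x) (\<alpha> y) \<longleftrightarrow> R (\<alpha>' x) (\<alpha>' y))"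
proof -
  have AB: "atomic_equiv (block_position A D \<alpha> \<beta>) (block_position B D \<alpha>' \<beta>')"
    and BA: "atomic_equiv (block_position B D \<alpha> \<beta>) (block_position A D \<alpha>' \<beta>')"
    using rel game_equiv_atomic_equiv unfolding swap_related_def by blast+
  have px: "swap_partners (\<alpha> x) (\<alpha>' x)" and py: "swap_partners (\<alpha> y) (\<alpha>' y)"
    using rel \<open>x \<in> D\<close> \<open>y \<in> D\<close> unfolding swap_related_def by auto
  consider "\<alpha> x \<in> A" "\<alpha> y \<in> A" | "\<alpha> x \<in> B" "\<alpha> y \<in> B" | "\<alpha> x \<in> A" "\<alpha> y \<in> B"
    | "\<alpha> x \<in> B" "\<alpha> y \<in> A" | "\<alpha> x \<notin> A \<union> B" "\<alpha> y \<notin> A \<union> B"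
    | "\<alpha> x \<in> A \<union> B" "\<alpha> y \<notin> A \<union> B" | "\<alpha> x \<notin> A \<union> B" "\<alpha> y \<in> A \<union> B"
    by blast
  then show ?thesis
  proof cases
    case 1
    then show ?thesis using atomic_equiv_block_position(1)[OF AB \<open>x \<in> D\<close>] \<open>y \<in> D\<close> by blast
  next
    case 2
    then show ?thesis using atomic_equiv_block_position(1)[OF BA \<open>x \<in> D\<close>] \<open>y \<in> D\<close> by blast
  next
    case 3
    then have "\<alpha>' x \<in> B" "\<alpha>' y \<in> A" using swap_partners_A[OF px] swap_partners_B[OF py] by auto
    then show ?thesis using 3 disjoint not_related[of "\<alpha> x" "\<alpha> y"] not_related[of "\<alpha>' y" "\<alpha>' x"]
      by auto
  next
    case 4
    then have "\<alpha>' x \<in> A" "\<alpha>' y \<in> B" using swap_partners_B[OF px] swap_partners_A[OF py] by auto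
    then show ?thesis using 4 disjoint not_related[of "\<alpha> y" "\<alpha> x"] not_related[of "\<alpha>' x" "\<alpha>' y"]
      by auto
  next
    case 5
    then show ?thesis using swap_partners_outside[OF px] swap_partners_outside[OF py] by auto
  next
    case 6
    then show ?thesis using swap_related_inside_outside[OF rel \<open>x \<in> D\<close> \<open>y \<in> D\<close>] by blast
  next
    case 7
    then show ?thesis using swap_related_inside_outside[OF rel \<open>y \<in> D\<close> \<open>x \<in> D\<close>] by metis
  qed
qed

lemma swap_related_mem:
  assumes rel: "swap_related r D \<alpha> \<beta> \<alpha>' \<beta>'" and "x \<in> D" "X \<in> N2"
  shows "\<alpha> x \<in> \<beta> X \<longleftrightarrow> \<alpha>' x \<in> \<beta>' X"
proof -
  have AB: "atomic_equiv (block_position A D \<alpha> \<beta>) (block_position B D \<alpha>' \<beta>')"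
    and BA: "atomic_equiv (block_position B D \<alpha> \<beta>) (block_position A D \<alpha>' \<beta>')"
    using rel game_equiv_atomic_equiv unfolding swap_related_def by blast+
  have p: "swap_partners (\<alpha> x) (\<alpha>' x)" and outside: "\<beta> X - (A \<union> B) = \<beta>' X - (A \<union> B)"
    using rel \<open>x \<in> D\<close> unfolding swap_related_def by auto
  consider "\<alpha> x \<in> A" | "\<alpha> x \<in> B" | "\<alpha> x \<notin> A \<union> B" by blast
  then show ?thesis
  proof cases
    case 1
    then show ?thesis using atomic_equiv_block_position(2)[OF AB \<open>x \<in> D\<close>] \<open>X \<in> N2\<close> by blast
  next
    case 2
    then show ?thesis using atomic_equiv_block_position(2)[OF BA \<open>x \<in> D\<close>] \<open>X \<in> N2\<close> by blast
  next
    case 3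
    have "\<alpha> x \<in> \<beta> X - (A \<union> B) \<longleftrightarrow> \<alpha> x \<in> \<beta>' X - (A \<union> B)" by (simp only: outside)
    then show ?thesis using swap_partners_outside[OF p 3] 3 by simp
  qed
qed

lemma swap_related_assign_quantifiers:
  assumes rel: "swap_related (Suc r) D \<alpha> \<beta> \<alpha>' \<beta>'" and "v \<in> N1"
    and IH: "\<And>a a'. swap_related r (insert v D) (\<alpha>(v := a)) \<beta> (\<alpha>'(v := a')) \<beta>' \<Longrightarrow> P a \<longleftrightarrow> P' a'"
  shows "(\<exists>a\<in>U. P a) \<longleftrightarrow> (\<exists>a'\<in>U. P' a')" and "(\<forall>a\<in>U. P a) \<longleftrightarrow> (\<forall>a'\<in>U. P' a')"
proof -
  have forward: "\<exists>a'\<in>U. P a \<longleftrightarrow> P' a'" if "a \<in> U" for a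
    using swap_related_assign[OF rel \<open>v \<in> N1\<close> that] IH by blast
  have backward: "\<exists>a\<in>U. P a \<longleftrightarrow> P' a'" if "a' \<in> U" for a'
  proof -
    obtain a where "a \<in> U" and rel': "swap_related r (insert v D) (\<alpha>'(v := a')) \<beta>' (\<alpha>(v := a)) \<beta>"
      using swap_related_assign[OF swap_related_sym[OF rel] \<open>v \<in> N1\<close> \<open>a' \<in> U\<close>] by blast
    then show ?thesis using IH[OF swap_related_sym[OF rel']] by blast
  qed
  show "(\<exists>a\<in>U. P a) \<longleftrightarrow> (\<exists>a'\<in>U. P' a')" and "(\<forall>a\<in>U. P a) \<longleftrightarrow> (\<forall>a'\<in>U. P' a')"
    using forward backward by meson+
qed

lemma swap_related_assign_set_quantifiers:
  assumes rel: "swap_related (Suc r) D \<alpha> \<beta> \<alpha>' \<beta>'" and "X \<in> N2"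
    and IH: "\<And>T T'. swap_related r D \<alpha> (\<beta>(X := T)) \<alpha>' (\<beta>'(X := T')) \<Longrightarrow> P T \<longleftrightarrow> P' T'"
  shows "(\<exists>T\<subseteq>U. P T) \<longleftrightarrow> (\<exists>T'\<subseteq>U. P' T')" and "(\<forall>T\<subseteq>U. P T) \<longleftrightarrow> (\<forall>T'\<subseteq>U. P' T')"
proof -
  have forward: "\<exists>T'\<subseteq>U. P T \<longleftrightarrow> P' T'" if "T \<subseteq> U" for T
    using swap_related_assign_set[OF rel \<open>X \<in> N2\<close> that] IH by blast
  have backward: "\<exists>T\<subseteq>U. P T \<longleftrightarrow> P' T'" if "T' \<subseteq> U" for T'
  proof -
    obtain T where "T \<subseteq> U" and rel': "swap_related r D \<alpha>' (\<beta>'(X := T')) \<alpha> (\<beta>(X := T))"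
      using swap_related_assign_set[OF swap_related_sym[OF rel] \<open>X \<in> N2\<close> \<open>T' \<subseteq> U\<close>] by blast
    then show ?thesis using IH[OF swap_related_sym[OF rel']] by blast
  qed
  show "(\<exists>T\<subseteq>U. P T) \<longleftrightarrow> (\<exists>T'\<subseteq>U. P' T')" and "(\<forall>T\<subseteq>U. P T) \<longleftrightarrow> (\<forall>T'\<subseteq>U. P' T')"
    using forward backward by meson+
qed

theorem sat_swap:
  assumes "swap_related r D \<alpha> \<beta> \<alpha>' \<beta>'" "qr \<phi> \<le> r" "fv1 \<phi> \<subseteq> D" "vars1 \<phi> \<subseteq> N1" "vars2 \<phi> \<subseteq> N2"
  shows "sat U R \<alpha> \<beta> \<phi> = sat U R \<alpha>' \<beta>' \<phi>"
  using assms
proof (induction \<phi> arbitrary: r D \<alpha> \<beta> \<alpha>' \<beta>')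
  case (Eq x y)
  then show ?case using swap_related_atomic[of r D \<alpha> \<beta> \<alpha>' \<beta>' x y] by simp
next
  case (Mem x X)
  then show ?case using swap_related_mem[of r D \<alpha> \<beta> \<alpha>' \<beta>' x X] by simp
next
  case (Rel x y)
  then show ?case using swap_related_atomic[of r D \<alpha> \<beta> \<alpha>' \<beta>' x y] by simp
next
  case (Neg \<phi>)
  then show ?case by simp
next
  case (Conj \<phi> \<psi>)
  then show ?case by simp
next
  case (Disj \<phi> \<psi>)
  then show ?case by simp
next
  case (Ex1 v \<phi>)
  then obtain r' where r: "r = Suc r'" by (cases r) auto
  have "sat U R (\<alpha>(v := a)) \<beta> \<phi> \<longleftrightarrow> sat U R (\<alpha>'(v := a')) \<beta>' \<phi>"
    if "swap_related r' (insert v D) (\<alpha>(v := a)) \<beta> (\<alpha>'(v := a')) \<beta>'" for a a'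
    by (rule Ex1.IH[OF that]) (use Ex1.prems r in auto)
  moreover have "v \<in> N1" using Ex1.prems(4) by simp
  ultimately show ?case
    unfolding sat.simps by (intro swap_related_assign_quantifiers(1)[OF Ex1.prems(1)[unfolded r]])
next
  case (All1 v \<phi>)
  then obtain r' where r: "r = Suc r'" by (cases r) auto
  have "sat U R (\<alpha>(v := a)) \<beta> \<phi> \<longleftrightarrow> sat U R (\<alpha>'(v := a')) \<beta>' \<phi>"
    if "swap_related r' (insert v D) (\<alpha>(v := a)) \<beta> (\<alpha>'(v := a')) \<beta>'" for a a'
    by (rule All1.IH[OF that]) (use All1.prems r in auto)
  moreover have "v \<in> N1" using All1.prems(4) by simp
  ultimately show ?case
    unfolding sat.simps by (intro swap_related_assign_quantifiers(2)[OF All1.prems(1)[unfolded r]])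
next
  case (Ex2 X \<phi>)
  then obtain r' where r: "r = Suc r'" by (cases r) auto
  have "sat U R \<alpha> (\<beta>(X := T)) \<phi> \<longleftrightarrow> sat U R \<alpha>' (\<beta>'(X := T')) \<phi>"
    if "swap_related r' D \<alpha> (\<beta>(X := T)) \<alpha>' (\<beta>'(X := T'))" for T T'
    by (rule Ex2.IH[OF that]) (use Ex2.prems r in auto)
  moreover have "X \<in> N2" using Ex2.prems(5) by simp
  ultimately show ?case
    unfolding sat.simps
    by (intro swap_related_assign_set_quantifiers(1)[OF Ex2.prems(1)[unfolded r]])
next
  case (All2 X \<phi>)
  then obtain r' where r: "r = Suc r'" by (cases r) auto
  have "sat U R \<alpha> (\<beta>(X := T)) \<phi> \<longleftrightarrow> sat U R \<alpha>' (\<beta>'(X := T')) \<phi>"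
    if "swap_related r' D \<alpha> (\<beta>(X := T)) \<alpha>' (\<beta>'(X := T'))" for T T'
    by (rule All2.IH[OF that]) (use All2.prems r in auto)
  moreover have "X \<in> N2" using All2.prems(5) by simp
  ultimately show ?case
    unfolding sat.simps
    by (intro swap_related_assign_set_quantifiers(2)[OF All2.prems(1)[unfolded r]])
qed

lemma sat_swap_blocks:
  assumes "block_type r \<beta> X Y A = block_type r \<beta> X Y B" and "X \<noteq> Y"
    and \<psi>: "qr \<psi> \<le> r" "fv1 \<psi> = {}" "vars1 \<psi> \<subseteq> N1" "vars2 \<psi> \<subseteq> N2"
  shows "sat U R undefined (\<beta>(X := A, Y := B)) \<psi> \<longleftrightarrow> sat U R undefined (\<beta>(X := B, Y := A)) \<psi>"
proof -
  have eqX: "game_equiv r (block_position A {} undefined (\<beta>(X := A, Y := {})))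
      (block_position B {} undefined (\<beta>(X := B, Y := {})))"
    and eqY: "game_equiv r (block_position A {} undefined (\<beta>(X := {}, Y := A)))
      (block_position B {} undefined (\<beta>(X := {}, Y := B)))"
    using assms(1) unfolding block_type_def by (simp_all add: game_class_eq_iff)
  have view: "same_view (block_position C {} undefined (\<beta>(X := A1, Y := B1)))
      (block_position C {} undefined (\<beta>(X := A2, Y := B2)))"
    if "A2 \<inter> C = A1 \<inter> C" "B2 \<inter> C = B1 \<inter> C" for C A1 B1 A2 B2
    using that \<open>X \<noteq> Y\<close> by (auto simp: block_position_def)
  have "game_equiv r (block_position A {} undefined (\<beta>(X := A, Y := B)))
      (block_position B {} undefined (\<beta>(X := B, Y := A)))"
    by (rule game_equiv_same_view_right[OF game_equiv_same_view[OF eqX]];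
        rule view; use disjoint in blast)
  moreover have "game_equiv r (block_position B {} undefined (\<beta>(X := A, Y := B)))
      (block_position A {} undefined (\<beta>(X := B, Y := A)))"
    by (rule game_equiv_same_view_right[OF game_equiv_same_view[OF game_equiv_sym[OF eqY]]];
        rule view; use disjoint in blast)
  moreover have "\<forall>W. (\<beta>(X := A, Y := B)) W - (A \<union> B) = (\<beta>(X := B, Y := A)) W - (A \<union> B)" by auto
  ultimately have "swap_related r {} undefined (\<beta>(X := A, Y := B)) undefined (\<beta>(X := B, Y := A))"
    unfolding swap_related_def by blast
  then show ?thesis by (rule sat_swap) (use \<psi> in auto)
qed

end

lemma double_le_power2: "2 * n \<le> (2::nat) ^ n"
proof (induction n)
  case (Suc n)
  then show ?case by (cases "n = 0") (simp_all add: Suc_leI)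
qed simp

lemma exp_tower_mono: "j \<le> j' \<Longrightarrow> exp_tower j k \<le> exp_tower j' k"
  by (rule lift_Suc_mono_le[of "\<lambda>j. exp_tower j k"]) (simp_all add: less_imp_le)

lemma exp_tower_add: "x \<le> exp_tower j k \<Longrightarrow> x + c \<le> exp_tower (j + c) k"
proof (induction c)
  case (Suc c)
  then have "x + c < 2 ^ exp_tower (j + c) k" using less_exp[of "exp_tower (j + c) k"] by linarith
  then show ?case by simp
qed simp

lemma exp_tower_mult: "x \<le> exp_tower j k \<Longrightarrow> c * x \<le> exp_tower (j + c) k"
proof (induction c)
  case (Suc c)
  have "x \<le> exp_tower (j + c) k" using Suc.prems exp_tower_mono[of j "j + c" k] by simp
  then have "Suc c * x \<le> 2 * exp_tower (j + c) k" using Suc by simp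
  also have "\<dots> \<le> exp_tower (j + Suc c) k" using double_le_power2 by simp
  finally show ?case .
qed simp

lemma exp_tower_power2: "x \<le> exp_tower j k \<Longrightarrow> 2 ^ x \<le> exp_tower (Suc j) k"
  by (simp add: power_increasing)

lemma exp_tower_square: "x \<le> exp_tower j k \<Longrightarrow> x * x \<le> exp_tower (j + 2) k"
proof -
  assume "x \<le> exp_tower j k"
  have "x * x \<le> 2 ^ x * 2 ^ x" using less_exp[of x] by (simp add: mult_le_mono less_imp_le)
  also have "\<dots> = 2 ^ (2 * x)" by (simp add: mult_2 power_add)
  also have "\<dots> \<le> exp_tower (j + 2) k"
  proof -
    have "2 * x \<le> exp_tower (Suc j) k"
      using double_le_power2[of x] exp_tower_power2[OF \<open>x \<le> exp_tower j k\<close>] by linarith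
    then show ?thesis using exp_tower_power2 by simp
  qed
  finally show ?thesis .
qed

lemma class_bound_le_exp_tower:
  assumes "K \<le> k"
  shows "class_bound n1 n2 K r \<le>
    exp_tower (n1 + n1 * n1 + n1 * n1 + n1 * n2 + (n1 + n1) + 1 + r * (n1 + n1 + n2 + 2)) k"
proof (induction r)
  case 0
  let ?a = "n1 + n1 * n1 + n1 * n1 + n1 * n2"
  have "(n1 + n1) * K \<le> (n1 + n1) * k" using assms by simp
  also have "\<dots> \<le> exp_tower (n1 + n1) k" using exp_tower_mult[of k 0 k "n1 + n1"] by simp
  finally have "(n1 + n1) * K + ?a \<le> exp_tower (n1 + n1 + ?a) k" using exp_tower_add by simp
  then have "2 ^ ((n1 + n1) * K + ?a) \<le> exp_tower (Suc (n1 + n1 + ?a)) k" by (rule exp_tower_power2)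
  then show ?case by (simp add: algebra_simps)
next
  case (Suc r)
  let ?j = "n1 + n1 * n1 + n1 * n1 + n1 * n2 + (n1 + n1) + 1 + r * (n1 + n1 + n2 + 2)"
  have "(n1 + n1 + n2 + 1) * class_bound n1 n2 K r \<le> exp_tower (?j + (n1 + n1 + n2 + 1)) k"
    using Suc by (rule exp_tower_mult)
  then have "class_bound n1 n2 K (Suc r) \<le> exp_tower (Suc (?j + (n1 + n1 + n2 + 1))) k"
    unfolding class_bound.simps by (rule exp_tower_power2)
  then show ?case by (simp add: algebra_simps)
qed

text \<open>The height from class_bound_le_exp_tower for n1 = m + 2 first-order variables,
  n2 = n + m + 2 set variables and m + 2 rounds, plus 2 for squaring.\<close>
definition tower_height :: "nat \<Rightarrow> nat \<Rightarrow> nat" where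
  "tower_height n m =
    (let n1 = m + 2; n2 = n + m + 2
     in n1 + n1 * n1 + n1 * n1 + n1 * n2 + (n1 + n1) + 1 + n1 * (n1 + n1 + n2 + 2) + 2)"

lemma class_bound_square_le_exp_tower:
  "K \<le> k \<Longrightarrow> class_bound (m + 2) (n + m + 2) K (m + 2) * class_bound (m + 2) (n + m + 2) K (m + 2)
    \<le> exp_tower (tower_height n m) k"
  unfolding tower_height_def Let_def by (rule exp_tower_square[OF class_bound_le_exp_tower])

definition rf_add :: recf where
  "rf_add = PrimRec (Proj 0) (Comp Succ [Proj 1])"

definition rf_mult :: recf where
  "rf_mult = PrimRec Zero (Comp rf_add [Proj 1, Proj 2])"

lemma eval_Comp2: "eval g1 xs a \<Longrightarrow> eval g2 xs b \<Longrightarrow> eval f [a, b] z \<Longrightarrow> eval (Comp f [g1, g2]) xs z"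
  by (rule eval_Comp[of "[a, b]"]) (auto simp: less_Suc_eq)

lemma eval_rf_add: "eval rf_add [x, y] (x + y)"
proof (induction x)
  case 0
  show ?case unfolding rf_add_def using eval_Proj[of 0 "[y]"] by (auto intro: eval_PrimRec0)
next
  case (Suc x)
  have "eval (Comp Succ [Proj 1]) [x, x + y, y] (Suc (x + y))"
    using eval_Proj[of 1 "[x, x + y, y]"] eval_Succ[of "x + y" "[]"]
    by (intro eval_Comp[of "[x + y]"]) auto
  with Suc show ?case unfolding rf_add_def by (auto intro: eval_PrimRecS)
qed

lemma eval_rf_mult: "eval rf_mult [x, y] (x * y)"
proof (induction x)
  case 0
  show ?case unfolding rf_mult_def by (auto intro: eval_PrimRec0 eval_Zero)
next
  case (Suc x)
  have "eval (Comp rf_add [Proj 1, Proj 2]) [x, x * y, y] (x * y + y)"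
    using eval_Proj[of 1 "[x, x * y, y]"] eval_Proj[of 2 "[x, x * y, y]"]
    by (intro eval_Comp2[OF _ _ eval_rf_add]) (auto simp: numeral_2_eq_2)
  with Suc show ?case unfolding rf_mult_def by (auto intro: eval_PrimRecS simp: add.commute)
qed

lemma computable2_fst: "computable2 (\<lambda>n m. n)"
  unfolding computable2_def using eval_Proj[of 0 "[n, m]" for n m] by auto

lemma computable2_snd: "computable2 (\<lambda>n m. m)"
  unfolding computable2_def using eval_Proj[of 1 "[n, m]" for n m] by auto

lemma computable2_const: "computable2 (\<lambda>n m. c)"
proof (induction c)
  case 0
  then show ?case unfolding computable2_def by (auto intro: eval_Zero)
next
  case (Suc c)
  then obtain f where "\<And>n m. eval f [n, m] c" unfolding computable2_def by blast
  then have "eval (Comp Succ [f]) [n, m] (Suc c)" for n m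
    using eval_Succ[of c "[]"] by (intro eval_Comp[of "[c]"]) auto
  then show ?case unfolding computable2_def by blast
qed

lemma computable2_add: "computable2 f \<Longrightarrow> computable2 g \<Longrightarrow> computable2 (\<lambda>n m. f n m + g n m)"
proof -
  assume "computable2 f" "computable2 g"
  then obtain cf cg where "\<And>n m. eval cf [n, m] (f n m)" "\<And>n m. eval cg [n, m] (g n m)"
    unfolding computable2_def by blast
  then have "eval (Comp rf_add [cf, cg]) [n, m] (f n m + g n m)" for n m
    by (rule eval_Comp2[OF _ _ eval_rf_add])
  then show ?thesis unfolding computable2_def by blast
qed

lemma computable2_mult: "computable2 f \<Longrightarrow> computable2 g \<Longrightarrow> computable2 (\<lambda>n m. f n m * g n m)"
proof -
  assume "computable2 f" "computable2 g"
  then obtain cf cg where "\<And>n m. eval cf [n, m] (f n m)" "\<And>n m. eval cg [n, m] (g n m)"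
    unfolding computable2_def by blast
  then have "eval (Comp rf_mult [cf, cg]) [n, m] (f n m * g n m)" for n m
    by (rule eval_Comp2[OF _ _ eval_rf_mult])
  then show ?thesis unfolding computable2_def by blast
qed

lemma computable2_tower_height: "computable2 tower_height"
  unfolding tower_height_def Let_def
  by (intro computable2_add computable2_mult computable2_fst computable2_snd computable2_const)

section \<open>Components and their blocks\<close>

lemma components_minus_subset: "C \<in> components_minus V E S \<Longrightarrow> C \<subseteq> V - S"
  unfolding components_minus_def by auto

lemma components_minus_nonempty: "C \<in> components_minus V E S \<Longrightarrow> C \<noteq> {}"
  unfolding components_minus_def by auto

lemma components_minus_closed:
  assumes "C \<in> components_minus V E S" "u \<in> C" "w \<in> V - S" "{u, w} \<in> E"
  shows "w \<in> C"
proof -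
  obtain v where C: "C = {w \<in> V - S. (v, w) \<in> (adj_minus V E S)\<^sup>*}"
    using assms(1) unfolding components_minus_def by blast
  have "(u, w) \<in> adj_minus V E S" using assms C unfolding adj_minus_def by auto
  then show ?thesis using assms(2,3) C by (auto intro: rtrancl_into_rtrancl)
qed

lemma components_minus_disjoint:
  assumes "C1 \<in> components_minus V E S" "C2 \<in> components_minus V E S" "C1 \<noteq> C2"
  shows "C1 \<inter> C2 = {}"
proof (rule ccontr)
  let ?r = "(adj_minus V E S)\<^sup>*"
  have sym: "sym ?r"
    by (rule sym_rtrancl) (auto simp: sym_def adj_minus_def insert_commute)
  obtain v1 v2 where C1: "C1 = {w \<in> V - S. (v1, w) \<in> ?r}" and C2: "C2 = {w \<in> V - S. (v2, w) \<in> ?r}"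
    using assms(1,2) unfolding components_minus_def by blast
  assume "C1 \<inter> C2 \<noteq> {}"
  then obtain x where "(v1, x) \<in> ?r" "(v2, x) \<in> ?r" using C1 C2 by blast
  then have "(v1, v2) \<in> ?r" "(v2, v1) \<in> ?r" using sym by (meson rtrancl_trans symD)+
  then have "C1 = C2" unfolding C1 C2 by (auto intro: rtrancl_trans)
  with assms(3) show False ..
qed

lemma finite_inc_univ: "graph V E \<Longrightarrow> finite (inc_univ V E)"
proof -
  assume "graph V E"
  then have "finite V" "E \<subseteq> Pow V" unfolding graph_def by auto
  then show ?thesis unfolding inc_univ_def by (simp add: finite_subset)
qed

definition component_block :: "nat set set \<Rightarrow> nat set \<Rightarrow> inc_elem set" where
  "component_block E C = VElem ` C \<union> EElem ` {e \<in> E. e \<inter> C \<noteq> {}}"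

lemma component_block_subset:
  "C \<in> components_minus V E S \<Longrightarrow> component_block E C \<subseteq> inc_univ V E"
  using components_minus_subset[of C V E S] unfolding component_block_def inc_univ_def by auto

lemma component_block_nonempty: "C \<in> components_minus V E S \<Longrightarrow> component_block E C \<noteq> {}"
  using components_minus_nonempty[of C V E S] unfolding component_block_def by simp

lemma component_block_separator_disjoint:
  "C \<in> components_minus V E S \<Longrightarrow> component_block E C \<inter> VElem ` S = {}"
  using components_minus_subset[of C V E S] unfolding component_block_def by auto

lemma inc_rel_component_block:
  assumes "graph V E" "C \<in> components_minus V E S" "inc_rel V E x y"
    and "x \<in> component_block E C \<or> y \<in> component_block E C"
  shows "x \<in> component_block E C \<union> VElem ` S" "y \<in> component_block E C"
proof -
  obtain u e where xy: "x = VElem u" "y = EElem e" and "u \<in> V" "e \<in> E" "u \<in> e"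
    using assms(3) unfolding inc_rel_def by auto
  have "u \<in> C \<or> u \<in> S" if c: "c \<in> e" "c \<in> C" for c
  proof (cases "u = c \<or> u \<in> S")
    case False
    then have "e = {c, u}" using \<open>e \<in> E\<close> \<open>u \<in> e\<close> c(1) assms(1) unfolding graph_def by fastforce
    then show ?thesis using components_minus_closed[OF assms(2) c(2)] \<open>u \<in> V\<close> False \<open>e \<in> E\<close> by auto
  qed (use that in auto)
  then show "x \<in> component_block E C \<union> VElem ` S" "y \<in> component_block E C"
    using assms(4) xy \<open>e \<in> E\<close> \<open>u \<in> e\<close> unfolding component_block_def by auto
qed

lemma component_blocks_disjoint:
  assumes "graph V E" "C1 \<in> components_minus V E S" "C2 \<in> components_minus V E S" "C1 \<noteq> C2"
  shows "component_block E C1 \<inter> component_block E C2 = {}"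
proof (rule equals0I)
  fix z assume z: "z \<in> component_block E C1 \<inter> component_block E C2"
  have "C1 \<inter> C2 = {}" using components_minus_disjoint[OF assms(2-4)] .
  then obtain e c where "z = EElem e" "e \<in> E" "c \<in> e" "c \<in> C2"
    using z unfolding component_block_def by auto
  moreover have "c \<in> V - S" using \<open>c \<in> C2\<close> components_minus_subset[OF assms(3)] by blast
  ultimately have "inc_rel V E (VElem c) z" unfolding inc_rel_def by auto
  then have "VElem c \<in> component_block E C1 \<union> VElem ` S"
    using inc_rel_component_block(1)[OF assms(1,2)] z by blast
  then show False using \<open>c \<in> C2\<close> \<open>c \<in> V - S\<close> \<open>C1 \<inter> C2 = {}\<close> unfolding component_block_def by auto
qed

lemma component_blocks_swappable:
  assumes "graph V E" "C1 \<in> components_minus V E S" "C2 \<in> components_minus V E S" "C1 \<noteq> C2"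
  shows "swappable_blocks (inc_rel V E) (VElem ` S) (inc_univ V E) (component_block E C1)
      (component_block E C2)"
proof
  let ?B1 = "component_block E C1" and ?B2 = "component_block E C2"
  note disj = component_blocks_disjoint[OF assms]
  note sep = component_block_separator_disjoint[OF assms(2)]
      component_block_separator_disjoint[OF assms(3)]
  note inc = inc_rel_component_block[OF assms(1,2)] inc_rel_component_block[OF assms(1,3)]
  show "?B1 \<subseteq> inc_univ V E" "?B2 \<subseteq> inc_univ V E"
    using component_block_subset assms(2,3) by blast+
  show "?B1 \<inter> ?B2 = {}" by (rule disj)
  show "\<not> inc_rel V E a b \<and> \<not> inc_rel V E b a" if "a \<in> ?B1" "b \<in> ?B2" for a b
    using that inc disj sep by blast
  show "w \<in> VElem ` S" if "a \<in> ?B1 \<union> ?B2" "w \<in> inc_univ V E - (?B1 \<union> ?B2)"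
    "inc_rel V E a w \<or> inc_rel V E w a" for a w
    using that inc by blast
qed

lemma linear_order_on_has_least:
  assumes "linear_order_on U r" "finite X" "X \<noteq> {}" "X \<subseteq> U"
  shows "\<exists>z\<in>X. \<forall>w\<in>X. (z, w) \<in> r"
  using assms(2-4)
proof (induction X rule: finite_ne_induct)
  case (singleton x)
  then show ?case using assms(1)
    by (auto simp: linear_order_on_def partial_order_on_def preorder_on_def refl_on_def)
next
  case (insert x X)
  have refl: "refl_on U r" and trans: "trans r" and total: "total_on U r"
    using assms(1) unfolding linear_order_on_def partial_order_on_def preorder_on_def by blast+
  obtain z where z: "z \<in> X" "\<forall>w\<in>X. (z, w) \<in> r" using insert by blast
  have "x \<in> U" "z \<in> U" using insert.prems z(1) by auto
  show ?case
  proof (cases "(x, z) \<in> r")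
    case True
    then have "\<forall>w\<in>insert x X. (x, w) \<in> r"
      using z(2) trans refl \<open>x \<in> U\<close> unfolding trans_def refl_on_def by blast
    then show ?thesis by blast
  next
    case False
    then have "(z, x) \<in> r" using total refl \<open>x \<in> U\<close> \<open>z \<in> U\<close> unfolding total_on_def refl_on_def
      by (cases "x = z") auto
    then show ?thesis using z by blast
  qed
qed

lemma linear_order_on_least_in_one_side:
  assumes "linear_order_on U r" "finite (A \<union> B)" "A \<noteq> {}" "A \<subseteq> U" "B \<subseteq> U" "A \<inter> B = {}"
  shows "(\<exists>z\<in>A. \<forall>w\<in>A \<union> B. (z, w) \<in> r) \<noteq> (\<exists>z\<in>B. \<forall>w\<in>A \<union> B. (z, w) \<in> r)"
proof -
  have "antisym r" using assms(1) unfolding linear_order_on_def partial_order_on_def by blast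
  moreover obtain z where "z \<in> A \<union> B" "\<forall>w\<in>A \<union> B. (z, w) \<in> r"
    using linear_order_on_has_least[OF assms(1,2)] assms(3-5) by blast
  ultimately show ?thesis using assms(6) unfolding antisym_def by blast
qed

definition least_in :: "mso \<Rightarrow> nat \<Rightarrow> nat \<Rightarrow> mso" where
  "least_in \<phi> X Y = Ex1 0 (Conj (Mem 0 X) (All1 1 (Disj (Neg (Disj (Mem 1 X) (Mem 1 Y))) \<phi>)))"

lemma sat_least_in:
  assumes "X \<noteq> Y" "\<beta> X \<subseteq> U" "\<beta> Y \<subseteq> U"
  shows "sat U R \<alpha> \<beta> (least_in \<phi> X Y) \<longleftrightarrow>
    (\<exists>z\<in>\<beta> X. \<forall>w\<in>\<beta> X \<union> \<beta> Y. sat U R (\<alpha>(0 := z, 1 := w)) \<beta> \<phi>)"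
  using assms unfolding least_in_def by auto

lemma mso_orderable_normal_form:
  assumes "mso_orderable n m U R"
  obtains \<phi> ord \<beta>0 where "qr \<phi> \<le> m" "fv1 \<phi> \<subseteq> {0, 1}" "vars1 \<phi> \<subseteq> {..<m + 2}" "vars2 \<phi> \<subseteq> {..<n + m}"
    and "linear_order_on U ord"
    and "\<And>\<alpha> \<beta> z w. \<forall>i<n. \<beta> i = \<beta>0 i \<Longrightarrow> z \<in> U \<Longrightarrow> w \<in> U \<Longrightarrow>
      sat U R (\<alpha>(0 := z, 1 := w)) \<beta> \<phi> \<longleftrightarrow> (z, w) \<in> ord"
proof -
  obtain \<phi> Ps where \<phi>: "qr \<phi> \<le> m" "fv1 \<phi> \<subseteq> {0, 1}" "fv2 \<phi> \<subseteq> {..<n}" "length Ps = n"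
    and lin: "linear_order_on U (defined_rel U R \<phi> Ps)"
    using assms unfolding mso_orderable_def by blast
  define \<beta>0 where "\<beta>0 i = (if i < length Ps then Ps ! i else {})" for i
  let ?\<phi> = "rename_by_depth n id id 0 \<phi>"
  have "vars1 ?\<phi> \<subseteq> {..<2 + 0 + qr \<phi>}" using \<phi>(2) by (intro vars1_rename_by_depth) auto
  moreover have "vars2 ?\<phi> \<subseteq> {..<n + 0 + qr \<phi>}" using \<phi>(3) by (intro vars2_rename_by_depth) auto
  moreover have "fv1 ?\<phi> \<subseteq> {0, 1}" using fv1_rename_by_depth[of n id id 0 \<phi>] \<phi>(2) by auto
  moreover have "sat U R (\<alpha>(0 := z, 1 := w)) \<beta> ?\<phi> \<longleftrightarrow> (z, w) \<in> defined_rel U R \<phi> Ps"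
    if "\<forall>i<n. \<beta> i = \<beta>0 i" "z \<in> U" "w \<in> U" for \<alpha> \<beta> z w
  proof -
    have "sat U R (\<alpha>(0 := z, 1 := w)) \<beta> ?\<phi> \<longleftrightarrow> sat U R (\<lambda>i. if i = 0 then z else w) \<beta>0 \<phi>"
      by (rule sat_rename_by_depth) (use \<phi>(2,3) that(1) in auto)
    then show ?thesis unfolding defined_rel_def \<beta>0_def using that(2,3) by simp
  qed
  ultimately show thesis using that[of ?\<phi> "defined_rel U R \<phi> Ps" \<beta>0] \<phi>(1) lin by fastforce
qed

text \<open>The set variables n + m and n + m + 1 are the first ones not used by the
  renamed ordering formula, so they can play the roles of X and Y.\<close>
lemma mso_orderable_least_in_formula:
  assumes "mso_orderable n m U R"
  obtains \<psi> ord \<beta> where "qr \<psi> \<le> m + 2" "fv1 \<psi> = {}" "vars1 \<psi> \<subseteq> {..<m + 2}" "vars2 \<psi> \<subseteq> {..<n + m + 2}"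
    and "linear_order_on U ord"
    and "\<And>\<alpha> A B. A \<subseteq> U \<Longrightarrow> B \<subseteq> U \<Longrightarrow>
      sat U R \<alpha> (\<beta>(n + m := A, n + m + 1 := B)) \<psi> \<longleftrightarrow> (\<exists>z\<in>A. \<forall>w\<in>A \<union> B. (z, w) \<in> ord)"
proof -
  obtain \<phi> ord \<beta> where \<phi>: "qr \<phi> \<le> m" "fv1 \<phi> \<subseteq> {0, 1}" "vars1 \<phi> \<subseteq> {..<m + 2}" "vars2 \<phi> \<subseteq> {..<n + m}"
    and lin: "linear_order_on U ord"
    and sat_\<phi>: "\<And>\<alpha> \<beta>' z w. \<forall>i<n. \<beta>' i = \<beta> i \<Longrightarrow> z \<in> U \<Longrightarrow> w \<in> U \<Longrightarrow>
      sat U R (\<alpha>(0 := z, 1 := w)) \<beta>' \<phi> \<longleftrightarrow> (z, w) \<in> ord"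
    using mso_orderable_normal_form[OF assms] by metis
  define \<psi> where "\<psi> = least_in \<phi> (n + m) (n + m + 1)"
  have "qr \<psi> \<le> m + 2" "fv1 \<psi> = {}" "vars1 \<psi> \<subseteq> {..<m + 2}" "vars2 \<psi> \<subseteq> {..<n + m + 2}"
    using \<phi> unfolding \<psi>_def least_in_def by auto
  moreover have "sat U R \<alpha> (\<beta>(n + m := A, n + m + 1 := B)) \<psi> \<longleftrightarrow> (\<exists>z\<in>A. \<forall>w\<in>A \<union> B. (z, w) \<in> ord)"
    if "A \<subseteq> U" "B \<subseteq> U" for \<alpha> A B
  proof -
    have "sat U R \<alpha> (\<beta>(n + m := A, n + m + 1 := B)) \<psi> \<longleftrightarrow>
        (\<exists>z\<in>A. \<forall>w\<in>A \<union> B. sat U R (\<alpha>(0 := z, 1 := w)) (\<beta>(n + m := A, n + m + 1 := B)) \<phi>)"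
      unfolding \<psi>_def using that by (subst sat_least_in) auto
    moreover have "sat U R (\<alpha>(0 := z, 1 := w)) (\<beta>(n + m := A, n + m + 1 := B)) \<phi> \<longleftrightarrow> (z, w) \<in> ord"
      if "z \<in> U" "w \<in> U" for z w
      using sat_\<phi>[OF _ that] by simp
    ultimately show ?thesis using that by blast
  qed
  ultimately show thesis by (rule that[OF _ _ _ _ lin])
qed

lemma inj_on_component_block_types:
  assumes G: "graph V E" and "X \<noteq> Y"
    and \<psi>: "qr \<psi> \<le> r" "fv1 \<psi> = {}" "vars1 \<psi> \<subseteq> N1" "vars2 \<psi> \<subseteq> N2"
    and lin: "linear_order_on (inc_univ V E) ord"
    and sat_\<psi>: "\<And>A B. A \<subseteq> inc_univ V E \<Longrightarrow> B \<subseteq> inc_univ V E \<Longrightarrow>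
      sat (inc_univ V E) (inc_rel V E) undefined (\<beta>(X := A, Y := B)) \<psi> \<longleftrightarrow>
        (\<exists>z\<in>A. \<forall>w\<in>A \<union> B. (z, w) \<in> ord)"
  shows "inj_on
    (\<lambda>C. block_game.block_type (inc_rel V E) (VElem ` S) N1 N2 r \<beta> X Y (component_block E C))
    (components_minus V E S)"
proof (rule inj_onI, rule ccontr)
  fix C1 C2 assume C: "C1 \<in> components_minus V E S" "C2 \<in> components_minus V E S" and "C1 \<noteq> C2"
    and same_type:
      "block_game.block_type (inc_rel V E) (VElem ` S) N1 N2 r \<beta> X Y (component_block E C1)
      = block_game.block_type (inc_rel V E) (VElem ` S) N1 N2 r \<beta> X Y (component_block E C2)"
  define A B where "A = component_block E C1" and "B = component_block E C2"
  interpret swappable_blocks "inc_rel V E" "VElem ` S" N1 N2 "inc_univ V E" A B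
    unfolding A_def B_def by (rule component_blocks_swappable[OF G C \<open>C1 \<noteq> C2\<close>])
  have "sat (inc_univ V E) (inc_rel V E) undefined (\<beta>(X := A, Y := B)) \<psi> \<longleftrightarrow>
      sat (inc_univ V E) (inc_rel V E) undefined (\<beta>(X := B, Y := A)) \<psi>"
    using same_type \<open>X \<noteq> Y\<close> unfolding A_def[symmetric] B_def[symmetric]
    by (rule sat_swap_blocks[OF _ _ \<psi>])
  moreover have "(\<exists>z\<in>A. \<forall>w\<in>A \<union> B. (z, w) \<in> ord) \<noteq> (\<exists>z\<in>B. \<forall>w\<in>A \<union> B. (z, w) \<in> ord)"
  proof (rule linear_order_on_least_in_one_side[OF lin _ _ A_subset B_subset disjoint])
    show "finite (A \<union> B)" using A_subset B_subset finite_inc_univ[OF G] by (simp add: finite_subset)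
    show "A \<noteq> {}" using component_block_nonempty[OF C(1)] unfolding A_def .
  qed
  ultimately show False
    using sat_\<psi>[OF A_subset B_subset] sat_\<psi>[OF B_subset A_subset] by (metis Un_commute)
qed

lemma card_components_minus_le:
  assumes G: "graph V E" and ord: "mso_orderable n m (inc_univ V E) (inc_rel V E)"
    and "S \<subseteq> V" "card S \<le> k"
  shows "card (components_minus V E S) \<le> exp_tower (tower_height n m) k"
proof -
  define N1 N2 where "N1 = {..<m + 2}" and "N2 = {..<n + m + 2}"
  obtain \<psi> ord \<beta> where \<psi>: "qr \<psi> \<le> m + 2" "fv1 \<psi> = {}" "vars1 \<psi> \<subseteq> N1" "vars2 \<psi> \<subseteq> N2"
    and lin: "linear_order_on (inc_univ V E) ord"
    and sat_\<psi>: "\<And>\<alpha> A B. A \<subseteq> inc_univ V E \<Longrightarrow> B \<subseteq> inc_univ V E \<Longrightarrow>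
      sat (inc_univ V E) (inc_rel V E) \<alpha> (\<beta>(n + m := A, n + m + 1 := B)) \<psi> \<longleftrightarrow>
        (\<exists>z\<in>A. \<forall>w\<in>A \<union> B. (z, w) \<in> ord)"
    using mso_orderable_least_in_formula[OF ord] unfolding N1_def N2_def by metis
  define type where
    "type C = block_game.block_type (inc_rel V E) (VElem ` S) N1 N2 (m + 2) \<beta> (n + m) (n + m + 1)
      (component_block E C)" for C
  have inj: "inj_on type (components_minus V E S)"
    unfolding type_def by (rule inj_on_component_block_types[OF G _ \<psi> lin sat_\<psi>]) simp
  define classes where
    "classes = block_game.game_class (inc_rel V E) (VElem ` S) N1 N2 (m + 2) ` block_game.positions N1"
  have types: "type ` components_minus V E S \<subseteq> classes \<times> classes"
    unfolding type_def classes_def using block_game.block_type_in_classes by blast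
  have "finite S" using \<open>S \<subseteq> V\<close> G unfolding graph_def by (auto intro: finite_subset)
  then have Z: "finite (VElem ` S)" "card (VElem ` S) \<le> k"
    using \<open>card S \<le> k\<close> card_image_le[of S VElem] by auto
  have N: "finite N1" "finite N2" "card N1 = m + 2" "card N2 = n + m + 2"
    unfolding N1_def N2_def by auto
  then have "finite classes \<and>
      card classes \<le> class_bound (card N1) (card N2) (card (VElem ` S)) (m + 2)"
    using Z unfolding classes_def by (intro block_game.finite_card_game_classes) auto
  then have "finite classes" and card_classes:
    "card classes \<le> class_bound (m + 2) (n + m + 2) (card (VElem ` S)) (m + 2)"
    unfolding N(3,4) by auto
  have "card (components_minus V E S) = card (type ` components_minus V E S)"
    using inj by (simp add: card_image)
  also have "\<dots> \<le> card classes * card classes"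
    using card_mono[OF _ types] \<open>finite classes\<close> by (simp add: card_cartesian_product)
  also have "\<dots> \<le> class_bound (m + 2) (n + m + 2) (card (VElem ` S)) (m + 2) *
      class_bound (m + 2) (n + m + 2) (card (VElem ` S)) (m + 2)"
    by (rule mult_le_mono[OF card_classes card_classes])
  also have "\<dots> \<le> exp_tower (tower_height n m) k"
    using Z(2) by (rule class_bound_square_le_exp_tower)
  finally show ?thesis .
qed

lemma Sep_le:
  assumes "graph V E" and "\<And>S. S \<subseteq> V \<Longrightarrow> card S \<le> k \<Longrightarrow> card (components_minus V E S) \<le> b"
  shows "Sep V E k \<le> b"
proof -
  have "finite {S. S \<subseteq> V \<and> card S \<le> k}" using assms(1) unfolding graph_def by simp
  then have "finite {card (components_minus V E S) | S. S \<subseteq> V \<and> card S \<le> k}"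
    by (simp add: setcompr_eq_image)
  moreover have "{card (components_minus V E S) | S. S \<subseteq> V \<and> card S \<le> k} \<noteq> {}" by auto
  ultimately show ?thesis
    unfolding Sep_def by (rule Max.boundedI) (use assms(2) in blast)
qed

theorem proposition4p3:
  shows "\<exists>f :: nat \<Rightarrow> nat \<Rightarrow> nat \<Rightarrow> nat.
     (\<forall>n m k V E. graph V E \<and> mso_orderable n m (inc_univ V E) (inc_rel V E)
        \<longrightarrow> Sep V E k \<le> f n m k) \<and>
     (\<exists>g. computable2 g \<and> (\<forall>n m k. f n m k \<le> exp_tower (g n m) k))"
proof (intro exI conjI allI impI)
  fix n m k V E
  assume "graph V E \<and> mso_orderable n m (inc_univ V E) (inc_rel V E)"
  then show "Sep V E k \<le> exp_tower (tower_height n m) k"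
    using card_components_minus_le[of V E n m] by (intro Sep_le) auto
next
  show "computable2 tower_height" by (rule computable2_tower_height)
qed simp

end
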